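(* Let $(X,d)$ and $(Y,d')$ be proper metric spaces and $\pi:(Y,\varepsilon_{d'})\to(X,\varepsilon_d)$ a continuous coarse equivalence with a continuous quasi-inverse $\varpi$. If $X+_fW$ is a compactification with the coarse Karlsson property, then $Y+_{f^\ast}W$ has the coarse Karlsson property, where $f^\ast(A)=\mathrm{Cl}_W\big(f(\mathrm{Cl}_X(\pi(A)))\big)$ for $A$ closed in $Y$.
   Context: For an admissible map $f$ (from closed sets of $X$ to closed sets of $W$, sending $\emptyset$ to $\emptyset$ and preserving finite unions), $X+_fW$ is $X\sqcup W$ with closed sets the $D$ with $D\cap X$ closed in $X$, $D\cap W$ closed in $W$, $f(D\cap X)\subseteq D$; a compactification means it is compact Hausdorff with $X$ dense. $\varepsilon_d$ is the bounded coarse structure of $d$; coarse maps, closeness and quasi-inverses are in the sense of Roe. $\mathfrak{U}_f$ is the unique uniformity of $X+_fW$; $S$ is $u$-small if $S\times S\subseteq u$. A coarse arc between $x,y$ is a coarse embedding $\lambda:[0,t]\to X$ with $\lambda(0)=x,\lambda(t)=y$. A set $\Upsilon$ of coarse arcs is equicoarse if (1) for every $r>0$ there is $s>0$ with $d(\lambda(a),\lambda(b))<s$ whenever $\lambda\in\Upsilon$, $|a-b|<r$; (2) for every $r>0$ there is $s>0$ with $|a-b|<s$ whenever $\lambda\in\Upsilon$, $d(\lambda(a),\lambda(b))<r$. A compactification $X+_fW$ has the coarse Karlsson property if there is an equicoarse $\Upsilon$ containing an arc between any two points of $X$ such that for every $u\in\mathfrak{U}_f$ there is a bounded $S\subseteq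 X$ with every arc in $\Upsilon$ whose image misses $S$ having $u$-small image. *)

theory Defs
  imports "HOL-Analysis.Analysis"
begin

definition proper_metric_space :: "'a set \<Rightarrow> ('a \<Rightarrow> 'a \<Rightarrow> real) \<Rightarrow> bool" where
  "proper_metric_space M d \<longleftrightarrow> Metric_space M d \<and>
     (\<forall>x\<in>M. \<forall>r. compactin (Metric_space.mtopology M d) (Metric_space.mcball M d x r))"

definition bounded_coarse :: "'a set \<Rightarrow> ('a \<Rightarrow> 'a \<Rightarrow> real) \<Rightarrow> ('a \<times> 'a) set set" where
  "bounded_coarse M d = {E. E \<subseteq> M \<times> M \<and> (\<exists>r. \<forall>(a,b)\<in>E. d a b \<le> r)}"

definition coarse_bounded :: "('a \<times> 'a) set set \<Rightarrow> 'a set \<Rightarrow> bool" where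
  "coarse_bounded \<E> B \<longleftrightarrow> B \<times> B \<in> \<E>"

definition coarse_map ::
  "'a set \<Rightarrow> ('a \<times> 'a) set set \<Rightarrow> 'b set \<Rightarrow> ('b \<times> 'b) set set \<Rightarrow> ('a \<Rightarrow> 'b) \<Rightarrow> bool" where
  "coarse_map MA EA MB EB g \<longleftrightarrow> g ` MA \<subseteq> MB \<and>
     (\<forall>B. B \<subseteq> MB \<longrightarrow> coarse_bounded EB B \<longrightarrow> coarse_bounded EA {a\<in>MA. g a \<in> B}) \<and>
     (\<forall>E\<in>EA. (\<lambda>(a,a'). (g a, g a')) ` E \<in> EB)"

definition close_maps :: "'a set \<Rightarrow> ('b \<times> 'b) set set \<Rightarrow> ('a \<Rightarrow> 'b) \<Rightarrow> ('a \<Rightarrow> 'b) \<Rightarrow> bool" where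
  "close_maps MA EB g h \<longleftrightarrow> (\<lambda>a. (g a, h a)) ` MA \<in> EB"

definition coarse_quasi_inverse ::
  "'a set \<Rightarrow> ('a \<times> 'a) set set \<Rightarrow> 'b set \<Rightarrow> ('b \<times> 'b) set set \<Rightarrow> ('a \<Rightarrow> 'b) \<Rightarrow> ('b \<Rightarrow> 'a) \<Rightarrow> bool" where
  "coarse_quasi_inverse MA EA MB EB g h \<longleftrightarrow>
     coarse_map MB EB MA EA h \<and> close_maps MB EB (g \<circ> h) id \<and> close_maps MA EA (h \<circ> g) id"

definition admissible_map :: "'x topology \<Rightarrow> 'w topology \<Rightarrow> ('x set \<Rightarrow> 'w set) \<Rightarrow> bool" where
  "admissible_map X W f \<longleftrightarrow>
     (\<forall>A. closedin X A \<longrightarrow> closedin W (f A)) \<and> f {} = {} \<and>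
     (\<forall>A B. closedin X A \<longrightarrow> closedin X B \<longrightarrow> f (A \<union> B) = f A \<union> f B)"

text \<open>X +_f W as a topology on the disjoint union (Inl = X-part, Inr = W-part), given by its closed sets.\<close>
definition plus_topology :: "'x topology \<Rightarrow> 'w topology \<Rightarrow> ('x set \<Rightarrow> 'w set) \<Rightarrow> ('x + 'w) topology" where
  "plus_topology X W f = topology (\<lambda>U. U \<subseteq> Inl ` topspace X \<union> Inr ` topspace W \<and>
     (let D = (Inl ` topspace X \<union> Inr ` topspace W) - U in
        closedin X (Inl -` D) \<and> closedin W (Inr -` D) \<and> Inr ` f (Inl -` D) \<subseteq> D))"

definition is_compactification :: "'x topology \<Rightarrow> 'w topology \<Rightarrow> ('x set \<Rightarrow> 'w set) \<Rightarrow> bool" where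
  "is_compactification X W f \<longleftrightarrow> admissible_map X W f \<and>
     compact_space (plus_topology X W f) \<and> Hausdorff_space (plus_topology X W f) \<and>
     (plus_topology X W f) closure_of (Inl ` topspace X) = topspace (plus_topology X W f)"

text \<open>The unique uniformity of a compact Hausdorff space: the neighbourhoods of the diagonal.\<close>
definition compact_uniformity :: "'a topology \<Rightarrow> ('a \<times> 'a) set set" where
  "compact_uniformity T = {u. u \<subseteq> topspace T \<times> topspace T \<and>
     (\<exists>U. openin (prod_topology T T) U \<and> {(z,z) | z. z \<in> topspace T} \<subseteq> U \<and> U \<subseteq> u)}"

definition small_for :: "('a \<times> 'a) set \<Rightarrow> 'a set \<Rightarrow> bool" where
  "small_for u S \<longleftrightarrow> S \<times> S \<subseteq> u"

definition coarse_embedding_interval :: "'a set \<Rightarrow> ('a \<Rightarrow> 'a \<Rightarrow> real) \<Rightarrow> real \<Rightarrow> (real \<Rightarrow> 'a) \<Rightarrow> bool" where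
  "coarse_embedding_interval M d t l \<longleftrightarrow> 0 \<le> t \<and> l ` {0..t} \<subseteq> M \<and>
     (\<forall>r>0. \<exists>s>0. \<forall>a\<in>{0..t}. \<forall>b\<in>{0..t}. \<bar>a - b\<bar> < r \<longrightarrow> d (l a) (l b) < s) \<and>
     (\<forall>r>0. \<exists>s>0. \<forall>a\<in>{0..t}. \<forall>b\<in>{0..t}. d (l a) (l b) < r \<longrightarrow> \<bar>a - b\<bar> < s)"

definition coarse_arc :: "'a set \<Rightarrow> ('a \<Rightarrow> 'a \<Rightarrow> real) \<Rightarrow> 'a \<Rightarrow> 'a \<Rightarrow> real \<times> (real \<Rightarrow> 'a) \<Rightarrow> bool" where
  "coarse_arc M d x y ar \<longleftrightarrow> coarse_embedding_interval M d (fst ar) (snd ar) \<and>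
     snd ar 0 = x \<and> snd ar (fst ar) = y"

definition equicoarse :: "('a \<Rightarrow> 'a \<Rightarrow> real) \<Rightarrow> (real \<times> (real \<Rightarrow> 'a)) set \<Rightarrow> bool" where
  "equicoarse d \<Upsilon> \<longleftrightarrow>
     (\<forall>r>0. \<exists>s>0. \<forall>(t,l)\<in>\<Upsilon>. \<forall>a\<in>{0..t}. \<forall>b\<in>{0..t}. \<bar>a - b\<bar> < r \<longrightarrow> d (l a) (l b) < s) \<and>
     (\<forall>r>0. \<exists>s>0. \<forall>(t,l)\<in>\<Upsilon>. \<forall>a\<in>{0..t}. \<forall>b\<in>{0..t}. d (l a) (l b) < r \<longrightarrow> \<bar>a - b\<bar> < s)"

definition coarse_karlsson ::
  "'x set \<Rightarrow> ('x \<Rightarrow> 'x \<Rightarrow> real) \<Rightarrow> 'w topology \<Rightarrow> ('x set \<Rightarrow> 'w set) \<Rightarrow> bool" where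
  "coarse_karlsson M d W f \<longleftrightarrow>
     (let X = Metric_space.mtopology M d in
      is_compactification X W f \<and>
      (\<exists>\<Upsilon>. equicoarse d \<Upsilon> \<and>
         (\<forall>x\<in>M. \<forall>y\<in>M. \<exists>ar\<in>\<Upsilon>. coarse_arc M d x y ar) \<and>
         (\<forall>ar\<in>\<Upsilon>. \<exists>x y. coarse_arc M d x y ar) \<and>
         (\<forall>u\<in>compact_uniformity (plus_topology X W f).
            \<exists>S. S \<subseteq> M \<and> Metric_space.mbounded M d S \<and>
              (\<forall>(t,l)\<in>\<Upsilon>. l ` {0..t} \<inter> S = {} \<longrightarrow> small_for u (Inl ` l ` {0..t})))))"

definition pull_admissible ::
  "'x topology \<Rightarrow> 'w topology \<Rightarrow> ('x set \<Rightarrow> 'w set) \<Rightarrow> ('y \<Rightarrow> 'x) \<Rightarrow> 'y set \<Rightarrow> 'w set" where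
  "pull_admissible X W f \<pi> A = W closure_of (f (X closure_of (\<pi> ` A)))"

end

theory Submission
  imports Defs
begin

(*
  Write Z = X +_f W and Z' = Y +_{f*} W.  In a compactification with the coarse Karlsson
  property, pairs of uniformly close points of X become small in Z outside a bounded set (the
  equicoarse arcs joining them are short, hence far out).  Consequently a closed set B lying within
  bounded distance of a closed set A satisfies f B <= f A.  As pi rho and rho pi are close to the
  identity, this makes the maps Inl o pi + id : Z' -> Z and Inl o rho + id : Z -> Z' continuous.
  Z' is a compactification: a closed subset of Z' missing W has f*-boundary empty, so the closure
  of its pi-image is compact and its trace on Y is bounded, hence compact; points of W are
  separated by pulling back along Z' -> Z; and f*(Y) contains f(X) = W.  Finally the Karlsson arcs
  of X are lifted to Y by composing with rho and restoring the endpoints.  The lifted arcs are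
  equicoarse, and they are small outside a bounded set because the extension of rho pi to Z' is
  the identity on W, so rho pi moves far-out points of Y only by small amounts.
*)

section \<open>The topology of X +_f W\<close>

lemma admissible_map_mono:
  assumes "admissible_map X W f" "closedin X A" "closedin X B" "A \<subseteq> B"
  shows "f A \<subseteq> f B"
proof -
  have "f B = f (A \<union> B)" using assms(4) by (simp add: Un_absorb1)
  also have "\<dots> = f A \<union> f B" using assms unfolding admissible_map_def by blast
  finally show ?thesis by blast
qed

lemma admissible_map_subset_topspace:
  "admissible_map X W f \<Longrightarrow> closedin X A \<Longrightarrow> f A \<subseteq> topspace W"
  unfolding admissible_map_def by (meson closedin_subset)

definition plus_open :: "'x topology \<Rightarrow> 'w topology \<Rightarrow> ('x set \<Rightarrow> 'w set) \<Rightarrow> ('x + 'w) set \<Rightarrow> bool"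
  where "plus_open X W f U \<longleftrightarrow> U \<subseteq> Inl ` topspace X \<union> Inr ` topspace W \<and>
     openin X (Inl -` U) \<and> openin W (Inr -` U) \<and> disjnt (Inr ` f (topspace X - Inl -` U)) U"

lemma plus_topology_eq_plus_open:
  assumes "admissible_map X W f"
  shows "plus_topology X W f = topology (plus_open X W f)"
proof -
  have "(U \<subseteq> Inl ` topspace X \<union> Inr ` topspace W \<and>
     (let D = (Inl ` topspace X \<union> Inr ` topspace W) - U in
        closedin X (Inl -` D) \<and> closedin W (Inr -` D) \<and> Inr ` f (Inl -` D) \<subseteq> D))
      \<longleftrightarrow> plus_open X W f U" for U
  proof (cases "U \<subseteq> Inl ` topspace X \<union> Inr ` topspace W")
    case True
    define D where "D = (Inl ` topspace X \<union> Inr ` topspace W) - U"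
    have DX: "Inl -` D = topspace X - Inl -` U" and DW: "Inr -` D = topspace W - Inr -` U"
      unfolding D_def by auto
    have "Inl -` U \<subseteq> topspace X" "Inr -` U \<subseteq> topspace W"
      using True by auto
    then have "closedin X (Inl -` D) \<longleftrightarrow> openin X (Inl -` U)"
      "closedin W (Inr -` D) \<longleftrightarrow> openin W (Inr -` U)"
      unfolding DX DW by (simp_all add: closedin_def double_diff)
    moreover have "Inr ` F \<subseteq> D \<longleftrightarrow> F \<subseteq> topspace W \<and> disjnt (Inr ` F) U" for F
      unfolding D_def disjnt_def by auto
    moreover have "f (topspace X - Inl -` U) \<subseteq> topspace W" if "openin X (Inl -` U)"
      using admissible_map_subset_topspace[OF assms] that by blast
    ultimately show ?thesis
      using True unfolding plus_open_def Let_def D_def[symmetric] DX by blast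
  qed (simp add: plus_open_def)
  then show ?thesis
    unfolding plus_topology_def by (metis (no_types, lifting) ext)
qed

lemma istopology_plus_open:
  assumes "admissible_map X W f"
  shows "istopology (plus_open X W f)"
  unfolding istopology_def
proof (intro conjI allI impI)
  fix S T assume S: "plus_open X W f S" and T: "plus_open X W f T"
  have "closedin X (topspace X - Inl -` S)" "closedin X (topspace X - Inl -` T)"
    using S T unfolding plus_open_def by auto
  then have "f (topspace X - Inl -` (S \<inter> T)) = f (topspace X - Inl -` S) \<union> f (topspace X - Inl -` T)"
    using assms unfolding admissible_map_def by (metis Diff_Int vimage_Int)
  then show "plus_open X W f (S \<inter> T)"
    using S T unfolding plus_open_def disjnt_def by (auto simp: vimage_Int)
next
  fix K assume K: "\<forall>S\<in>K. plus_open X W f S"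
  have "openin X (Inl -` \<Union>K)" "openin W (Inr -` \<Union>K)"
    using K unfolding plus_open_def vimage_Union by auto
  moreover have "disjnt (Inr ` f (topspace X - Inl -` \<Union>K)) S" if S: "S \<in> K" for S
  proof -
    have "closedin X (topspace X - Inl -` \<Union>K)"
      using \<open>openin X (Inl -` \<Union>K)\<close> by blast
    moreover have "closedin X (topspace X - Inl -` S)"
      using K S unfolding plus_open_def by blast
    ultimately have "f (topspace X - Inl -` \<Union>K) \<subseteq> f (topspace X - Inl -` S)"
      using S by (intro admissible_map_mono[OF assms]) auto
    moreover have "disjnt (Inr ` f (topspace X - Inl -` S)) S"
      using K S unfolding plus_open_def by blast
    ultimately show ?thesis
      by (meson disjnt_subset1 image_mono)
  qed
  ultimately show "plus_open X W f (\<Union>K)"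
    using K unfolding plus_open_def by (auto simp: disjnt_Union2)
qed

lemma openin_plus_topology:
  "admissible_map X W f \<Longrightarrow> openin (plus_topology X W f) U \<longleftrightarrow> plus_open X W f U"
  by (simp add: plus_topology_eq_plus_open istopology_plus_open)

lemma topspace_plus_topology:
  assumes "admissible_map X W f"
  shows "topspace (plus_topology X W f) = Inl ` topspace X \<union> Inr ` topspace W"
proof -
  have "Inl -` (Inl ` topspace X \<union> Inr ` topspace W) = topspace X"
    "Inr -` (Inl ` topspace X \<union> Inr ` topspace W) = topspace W"
    by auto
  then have "plus_open X W f (Inl ` topspace X \<union> Inr ` topspace W)"
    using assms unfolding plus_open_def admissible_map_def by simp
  then show ?thesis
    using openin_plus_topology[OF assms] openin_subset openin_topspace
    unfolding plus_open_def by (metis subset_antisym)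
qed

lemma closedin_plus_topology:
  assumes "admissible_map X W f"
  shows "closedin (plus_topology X W f) D \<longleftrightarrow> D \<subseteq> Inl ` topspace X \<union> Inr ` topspace W \<and>
    closedin X (Inl -` D) \<and> closedin W (Inr -` D) \<and> Inr ` f (Inl -` D) \<subseteq> D"
proof (cases "D \<subseteq> Inl ` topspace X \<union> Inr ` topspace W")
  case True
  let ?U = "Inl ` topspace X \<union> Inr ` topspace W - D"
  have "Inl -` ?U = topspace X - Inl -` D" "Inr -` ?U = topspace W - Inr -` D"
       "topspace X - Inl -` ?U = Inl -` D"
    using True by auto
  moreover have "Inl -` D \<subseteq> topspace X" "Inr -` D \<subseteq> topspace W"
    using True by auto
  moreover have "Inr ` f (Inl -` D) \<subseteq> D \<longleftrightarrow> disjnt (Inr ` f (Inl -` D)) ?U"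
    if "closedin X (Inl -` D)"
    using admissible_map_subset_topspace[OF assms that] unfolding disjnt_def by blast
  ultimately show ?thesis
    using True
    unfolding closedin_def topspace_plus_topology[OF assms] openin_plus_topology[OF assms] plus_open_def
    by (auto simp: disjnt_def)
qed (auto simp: closedin_def topspace_plus_topology[OF assms])

lemma continuous_map_Inl_plus_topology:
  assumes "admissible_map X W f"
  shows "continuous_map X (plus_topology X W f) Inl"
  unfolding continuous_map_closedin
proof (intro conjI allI impI)
  show "Inl \<in> topspace X \<rightarrow> topspace (plus_topology X W f)"
    by (simp add: topspace_plus_topology[OF assms])
  fix C assume "closedin (plus_topology X W f) C"
  then have "closedin X (Inl -` C)" "Inl -` C \<subseteq> topspace X"
    unfolding closedin_plus_topology[OF assms] by auto
  moreover have "{x \<in> topspace X. Inl x \<in> C} = Inl -` C \<inter> topspace X"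
    by auto
  ultimately show "closedin X {x \<in> topspace X. Inl x \<in> C}"
    by (simp add: Int_absorb2)
qed

lemma openin_plus_topology_Inl_image:
  assumes "admissible_map X W f" "openin X U"
  shows "openin (plus_topology X W f) (Inl ` U)"
proof -
  have eq: "Inl -` Inl ` U = U" "Inr -` Inl ` U = {}"
    by auto
  show ?thesis
    using assms openin_subset[OF assms(2)]
    unfolding openin_plus_topology[OF assms(1)] plus_open_def eq by (auto simp: disjnt_def)
qed

lemma closedin_plus_topology_Inl_image:
  assumes "admissible_map X W f"
  shows "closedin (plus_topology X W f) (Inl ` A) \<longleftrightarrow> closedin X A \<and> f A = {}"
proof -
  have eq: "Inl -` Inl ` A = A" "Inr -` Inl ` A = {}"
    by auto
  show ?thesis
    using assms closedin_subset[of X A]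
    unfolding closedin_plus_topology[OF assms] admissible_map_def eq by auto
qed

lemma closedin_plus_topology_Inr_image:
  assumes "admissible_map X W f" "closedin W C"
  shows "closedin (plus_topology X W f) (Inr ` C)"
proof -
  have eq: "Inl -` Inr ` C = {}" "Inr -` Inr ` C = C"
    by auto
  show ?thesis
    using assms closedin_subset[OF assms(2)]
    unfolding closedin_plus_topology[OF assms(1)] admissible_map_def eq by auto
qed

lemma closure_of_plus_topology_Inl_image:
  assumes "admissible_map X W f" "closedin X A"
  shows "plus_topology X W f closure_of (Inl ` A) = Inl ` A \<union> Inr ` f A"
proof (rule subset_antisym)
  have eq: "Inl -` (Inl ` A \<union> Inr ` f A) = A" "Inr -` (Inl ` A \<union> Inr ` f A) = f A"
    by auto
  have "closedin W (f A)"
    using assms unfolding admissible_map_def by blast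
  then have "closedin (plus_topology X W f) (Inl ` A \<union> Inr ` f A)"
    using assms closedin_subset[OF assms(2)] closedin_subset[of W "f A"]
    unfolding closedin_plus_topology[OF assms(1)] eq by auto
  then show "plus_topology X W f closure_of (Inl ` A) \<subseteq> Inl ` A \<union> Inr ` f A"
    by (simp add: closure_of_minimal)
next
  let ?D = "plus_topology X W f closure_of (Inl ` A)"
  have "Inl ` A \<subseteq> ?D"
    using closedin_subset[OF assms(2)]
    by (intro closure_of_subset) (auto simp: topspace_plus_topology[OF assms(1)])
  moreover have "closedin X (Inl -` ?D)" "Inr ` f (Inl -` ?D) \<subseteq> ?D"
    using closedin_closure_of[of "plus_topology X W f" "Inl ` A"]
    unfolding closedin_plus_topology[OF assms(1)] by blast+
  moreover from calculation have "f A \<subseteq> f (Inl -` ?D)"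
    by (intro admissible_map_mono[OF assms]) auto
  ultimately show "Inl ` A \<union> Inr ` f A \<subseteq> ?D"
    by blast
qed

lemma continuous_map_plus_topology:
  assumes f: "admissible_map X W f" and f': "admissible_map X' W f'"
    and g: "continuous_map X X' g"
    and boundary: "\<And>A. closedin X' A \<Longrightarrow> f {x \<in> topspace X. g x \<in> A} \<subseteq> f' A"
  shows "continuous_map (plus_topology X W f) (plus_topology X' W f') (case_sum (Inl \<circ> g) Inr)"
  unfolding continuous_map_closedin
proof (intro conjI allI impI)
  let ?h = "case_sum (Inl \<circ> g) Inr"
  show "?h \<in> topspace (plus_topology X W f) \<rightarrow> topspace (plus_topology X' W f')"
    using continuous_map_image_subset_topspace[OF g]
    by (auto simp: topspace_plus_topology[OF f] topspace_plus_topology[OF f'])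
  fix C assume "closedin (plus_topology X' W f') C"
  then have C: "C \<subseteq> Inl ` topspace X' \<union> Inr ` topspace W" "closedin X' (Inl -` C)"
    "closedin W (Inr -` C)" "Inr ` f' (Inl -` C) \<subseteq> C"
    unfolding closedin_plus_topology[OF f'] by blast+
  let ?D = "{z \<in> topspace (plus_topology X W f). ?h z \<in> C}"
  have DX: "Inl -` ?D = {x \<in> topspace X. g x \<in> Inl -` C}"
    by (auto simp: topspace_plus_topology[OF f])
  have DW: "Inr -` ?D = Inr -` C"
    using C(1) by (auto simp: topspace_plus_topology[OF f])
  have "closedin X (Inl -` ?D)"
    unfolding DX using closedin_continuous_map_preimage[OF g C(2)] .
  moreover have "f (Inl -` ?D) \<subseteq> Inr -` C"
    unfolding DX using boundary[OF C(2)] C(4) by blast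
  ultimately show "closedin (plus_topology X W f) ?D"
    unfolding closedin_plus_topology[OF f] DW using C(1,3)
    by (auto simp: topspace_plus_topology[OF f])
qed

lemma compact_space_plus_topology:
  assumes f: "admissible_map X W f" and "compact_space W"
    and compact: "\<And>D. closedin (plus_topology X W f) D \<Longrightarrow> Inr -` D = {} \<Longrightarrow> compactin X (Inl -` D)"
  shows "compact_space (plus_topology X W f)"
  unfolding compact_space_alt
proof (intro allI impI)
  let ?Z = "plus_topology X W f"
  fix \<U> assume \<U>: "(\<forall>U\<in>\<U>. openin ?Z U) \<and> topspace ?Z \<subseteq> \<Union>\<U>"
  have open_parts: "openin X (Inl -` U)" "openin W (Inr -` U)" if "U \<in> \<U>" for U
  proof -
    have "plus_open X W f U"
      using \<U> that openin_plus_topology[OF f] by blast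
    then show "openin X (Inl -` U)" "openin W (Inr -` U)"
      unfolding plus_open_def by blast+
  qed
  have "topspace W \<subseteq> \<Union>((-`) Inr ` \<U>)"
  proof
    fix w assume "w \<in> topspace W"
    then have "Inr w \<in> \<Union>\<U>"
      using \<U> by (auto simp: topspace_plus_topology[OF f])
    then show "w \<in> \<Union>((-`) Inr ` \<U>)"
      by auto
  qed
  then have "\<exists>\<F>. finite \<F> \<and> \<F> \<subseteq> (-`) Inr ` \<U> \<and> topspace W \<subseteq> \<Union>\<F>"
    using \<open>compact_space W\<close> open_parts unfolding compact_space_def
    by (intro compactinD) auto
  then obtain \<V> where \<V>: "finite \<V>" "\<V> \<subseteq> \<U>" "topspace W \<subseteq> \<Union>((-`) Inr ` \<V>)"
    unfolding ex_finite_subset_image by blast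
  let ?D = "topspace ?Z - \<Union>\<V>"
  have "closedin ?Z ?D"
    using \<U> \<V>(2) by (intro closedin_diff closedin_topspace openin_Union) blast
  moreover have "Inr -` ?D = {}"
    using \<V>(3) by (auto simp: topspace_plus_topology[OF f])
  ultimately have "compactin X (Inl -` ?D)"
    by (rule compact)
  moreover have "Inl -` ?D \<subseteq> \<Union>((-`) Inl ` \<U>)"
    using \<U> by blast
  ultimately have "\<exists>\<F>. finite \<F> \<and> \<F> \<subseteq> (-`) Inl ` \<U> \<and> Inl -` ?D \<subseteq> \<Union>\<F>"
    using open_parts by (intro compactinD) auto
  then obtain \<W> where \<W>: "finite \<W>" "\<W> \<subseteq> \<U>" "Inl -` ?D \<subseteq> \<Union>((-`) Inl ` \<W>)"
    unfolding ex_finite_subset_image by blast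
  have "topspace ?Z \<subseteq> \<Union>(\<V> \<union> \<W>)"
  proof
    fix z assume "z \<in> topspace ?Z"
    then show "z \<in> \<Union>(\<V> \<union> \<W>)"
      using \<open>Inr -` ?D = {}\<close> \<W>(3) by (cases z) auto
  qed
  then show "\<exists>\<F>. finite \<F> \<and> \<F> \<subseteq> \<U> \<and> topspace ?Z \<subseteq> \<Union>\<F>"
    using \<V> \<W> by (intro exI[of _ "\<V> \<union> \<W>"]) auto
qed

lemma Hausdorff_space_plus_topology:
  assumes f: "admissible_map X W f" and "Hausdorff_space X"
    and nbhd: "\<And>x. x \<in> topspace X \<Longrightarrow> \<exists>U K. openin X U \<and> closedin X K \<and> f K = {} \<and> x \<in> U \<and> U \<subseteq> K"
    and g: "continuous_map (plus_topology X W f) T g" and "Hausdorff_space T"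
    and inj: "inj_on (g \<circ> Inr) (topspace W)"
  shows "Hausdorff_space (plus_topology X W f)"
proof -
  let ?Z = "plus_topology X W f"
  define separated where "separated a b \<longleftrightarrow>
    (\<exists>U V. openin ?Z U \<and> openin ?Z V \<and> a \<in> U \<and> b \<in> V \<and> disjnt U V)" for a b
  have sym: "separated b a" if "separated a b" for a b
    using that unfolding separated_def by (metis disjnt_sym)
  have XX: "separated (Inl x) (Inl y)" if xy: "x \<in> topspace X" "y \<in> topspace X" "x \<noteq> y" for x y
  proof -
    obtain U V where "openin X U" "openin X V" "x \<in> U" "y \<in> V" "disjnt U V"
      using \<open>Hausdorff_space X\<close> xy unfolding Hausdorff_space_def by blast
    then show ?thesis
      unfolding separated_def using openin_plus_topology_Inl_image[OF f]
      by (intro exI[of _ "Inl ` U"] exI[of _ "Inl ` V"]) (auto simp: disjnt_def)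
  qed
  have XW: "separated (Inl x) (Inr w)" if x: "x \<in> topspace X" and w: "w \<in> topspace W" for x w
  proof -
    obtain U K where UK: "openin X U" "closedin X K" "f K = {}" "x \<in> U" "U \<subseteq> K"
      using nbhd x by blast
    then have "closedin ?Z (Inl ` K)"
      using closedin_plus_topology_Inl_image[OF f] by blast
    then have "openin ?Z (topspace ?Z - Inl ` K)"
      by blast
    moreover have "Inr w \<in> topspace ?Z - Inl ` K"
      using w by (auto simp: topspace_plus_topology[OF f])
    ultimately show ?thesis
      unfolding separated_def using openin_plus_topology_Inl_image[OF f UK(1)] UK(4,5)
      by (intro exI[of _ "Inl ` U"] exI[of _ "topspace ?Z - Inl ` K"]) (auto simp: disjnt_def)
  qed
  have WW: "separated (Inr v) (Inr w)" if "v \<in> topspace W" "w \<in> topspace W" "v \<noteq> w" for v w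
  proof -
    have "Inr v \<in> topspace ?Z" "Inr w \<in> topspace ?Z"
      using that by (auto simp: topspace_plus_topology[OF f])
    then have "g (Inr v) \<in> topspace T" "g (Inr w) \<in> topspace T"
      using continuous_map_image_subset_topspace[OF g] by blast+
    moreover have "g (Inr v) \<noteq> g (Inr w)"
      using inj that unfolding inj_on_def by auto
    ultimately obtain U V where "openin T U" "openin T V" "g (Inr v) \<in> U" "g (Inr w) \<in> V" "disjnt U V"
      using \<open>Hausdorff_space T\<close> unfolding Hausdorff_space_def by blast
    then show ?thesis
      unfolding separated_def
      using openin_continuous_map_preimage[OF g] \<open>Inr v \<in> topspace ?Z\<close> \<open>Inr w \<in> topspace ?Z\<close>
      by (intro exI[of _ "{z \<in> topspace ?Z. g z \<in> U}"] exI[of _ "{z \<in> topspace ?Z. g z \<in> V}"])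
        (auto simp: disjnt_def)
  qed
  show ?thesis
    unfolding Hausdorff_space_def separated_def[symmetric]
  proof (intro allI impI)
    fix a b assume ab: "a \<in> topspace ?Z \<and> b \<in> topspace ?Z \<and> a \<noteq> b"
    then show "separated a b"
    proof (cases a; cases b)
      fix x y assume "a = Inl x" "b = Inl y"
      then show "separated a b"
        using XX ab
        by (auto simp: topspace_plus_topology[OF f])
    next
      fix x w assume "a = Inl x" "b = Inr w"
      then show "separated a b"
        using XW ab
        by (auto simp: topspace_plus_topology[OF f])
    next
      fix w x assume "a = Inr w" "b = Inl x"
      then show "separated a b"
        using sym[OF XW] ab
        by (auto simp: topspace_plus_topology[OF f])
    next
      fix v w assume "a = Inr v" "b = Inr w"
      then show "separated a b"
        using WW ab
        by (auto simp: topspace_plus_topology[OF f])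
    qed
  qed
qed

lemma admissible_map_pull_admissible:
  assumes "admissible_map X W f"
  shows "admissible_map Y W (pull_admissible X W f \<pi>)"
  unfolding admissible_map_def pull_admissible_def
proof (intro conjI allI impI)
  show "W closure_of f (X closure_of (\<pi> ` {})) = {}"
    using assms unfolding admissible_map_def by simp
  fix A B
  have "f (X closure_of (\<pi> ` A) \<union> X closure_of (\<pi> ` B)) = f (X closure_of (\<pi> ` A)) \<union> f (X closure_of (\<pi> ` B))"
    using assms unfolding admissible_map_def by (meson closedin_closure_of)
  then show "W closure_of f (X closure_of (\<pi> ` (A \<union> B))) =
    W closure_of f (X closure_of (\<pi> ` A)) \<union> W closure_of f (X closure_of (\<pi> ` B))"
    by (simp add: image_Un)
qed simp

section \<open>Compactifications\<close>

lemma compactification_boundary_compactin_empty: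
  assumes "is_compactification X W f" "compactin X K"
  shows "f K = {}"
proof -
  have f: "admissible_map X W f" and "Hausdorff_space (plus_topology X W f)"
    using assms(1) unfolding is_compactification_def by blast+
  moreover have "compactin (plus_topology X W f) (Inl ` K)"
    using image_compactin[OF assms(2) continuous_map_Inl_plus_topology[OF f]] .
  ultimately show ?thesis
    using compactin_imp_closedin closedin_plus_topology_Inl_image by blast
qed

lemma compactification_compactin_if_boundary_empty:
  assumes "is_compactification X W f" "closedin X A" "f A = {}"
  shows "compactin X A"
proof -
  let ?Z = "plus_topology X W f"
  have f: "admissible_map X W f" and "compact_space ?Z"
    using assms(1) unfolding is_compactification_def by blast+
  have "closed_map (subtopology X A) ?Z Inl"
    unfolding closed_map_def
  proof (intro allI impI)
    fix C assume "closedin (subtopology X A) C"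
    then have "closedin X C" "C \<subseteq> A"
      using closedin_closed_subtopology[OF assms(2)] by blast+
    moreover from calculation have "f C = {}"
      using admissible_map_mono[OF f _ assms(2)] assms(3) by blast
    ultimately show "closedin ?Z (Inl ` C)"
      using closedin_plus_topology_Inl_image[OF f] by blast
  qed
  then have "proper_map (subtopology X A) ?Z Inl"
    by (simp add: closed_injective_imp_proper_map)
  then have "compactin (subtopology X A) {x \<in> topspace (subtopology X A). Inl x \<in> topspace ?Z}"
    using compactin_proper_map_preimage \<open>compact_space ?Z\<close> compact_space_def by blast
  moreover have "{x \<in> topspace (subtopology X A). Inl x \<in> topspace ?Z} = A"
    using closedin_subset[OF assms(2)] by (auto simp: topspace_plus_topology[OF f])
  ultimately show ?thesis
    by (simp add: compactin_subtopology)
qed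

lemma compactification_compact_boundary:
  assumes "is_compactification X W f"
  shows "compact_space W"
proof -
  let ?Z = "plus_topology X W f"
  have f: "admissible_map X W f" and "compact_space ?Z"
    using assms unfolding is_compactification_def by blast+
  have "closed_map W ?Z Inr"
    unfolding closed_map_def using closedin_plus_topology_Inr_image[OF f] by blast
  then have "proper_map W ?Z Inr"
    by (simp add: closed_injective_imp_proper_map)
  then have "compactin W {w \<in> topspace W. Inr w \<in> topspace ?Z}"
    using compactin_proper_map_preimage \<open>compact_space ?Z\<close> compact_space_def by blast
  moreover have "{w \<in> topspace W. Inr w \<in> topspace ?Z} = topspace W"
    by (auto simp: topspace_plus_topology[OF f])
  ultimately show ?thesis
    by (simp add: compact_space_def)
qed

lemma compactification_boundary_topspace:
  assumes "is_compactification X W f"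
  shows "f (topspace X) = topspace W"
proof -
  have f: "admissible_map X W f"
    and "plus_topology X W f closure_of (Inl ` topspace X) = topspace (plus_topology X W f)"
    using assms unfolding is_compactification_def by blast+
  then have "Inl ` topspace X \<union> Inr ` f (topspace X) = Inl ` topspace X \<union> Inr ` topspace W"
    by (simp add: closure_of_plus_topology_Inl_image topspace_plus_topology)
  then show ?thesis
    by blast
qed

section \<open>The uniformity of a compact Hausdorff space\<close>

lemma regular_Hausdorff_chain_obstruction:
  assumes "regular_space T" "Hausdorff_space T" "x \<in> topspace T" "y \<in> topspace T" "x \<noteq> y"
  obtains P R K where "openin T P" "openin T R" "x \<in> P" "y \<in> R"
    "closedin (prod_topology T T) K" "\<And>z. (z, z) \<notin> K"
    "\<And>a b c. a \<in> P \<Longrightarrow> c \<in> R \<Longrightarrow> b \<in> topspace T \<Longrightarrow> (a, b) \<in> K \<or> (b, c) \<in> K"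
proof -
  obtain P' R' where "openin T P'" "openin T R'" "x \<in> P'" "y \<in> R'" "disjnt P' R'"
    using assms(2-5) unfolding Hausdorff_space_def by metis
  moreover have shrink: "\<exists>P C. openin T P \<and> closedin T C \<and> z \<in> P \<and> P \<subseteq> C \<and> C \<subseteq> P'"
    if "openin T P'" "z \<in> P'" for z P'
    using assms(1) that unfolding neighbourhood_base_of_closedin[symmetric] neighbourhood_base_of
    by blast
  ultimately obtain P R PC RC where "openin T P" "closedin T PC" "x \<in> P" "P \<subseteq> PC" "PC \<subseteq> P'"
    "openin T R" "closedin T RC" "y \<in> R" "R \<subseteq> RC" "RC \<subseteq> R'"
    by meson
  define K where "K = PC \<times> (topspace T - P') \<union> (topspace T - R') \<times> RC"
  show thesis
  proof (rule that)
    show "closedin (prod_topology T T) K"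
      unfolding K_def using \<open>openin T P'\<close> \<open>openin T R'\<close> \<open>closedin T PC\<close> \<open>closedin T RC\<close>
      by (intro closedin_Un) (auto simp: closedin_prod_Times_iff)
    show "(z, z) \<notin> K" for z
      using \<open>PC \<subseteq> P'\<close> \<open>RC \<subseteq> R'\<close> unfolding K_def by blast
    show "(a, b) \<in> K \<or> (b, c) \<in> K" if "a \<in> P" "c \<in> R" "b \<in> topspace T" for a b c
      using that \<open>P \<subseteq> PC\<close> \<open>R \<subseteq> RC\<close> \<open>disjnt P' R'\<close> unfolding K_def disjnt_def by blast
  qed fact+
qed

lemma compact_Hausdorff_diagonal_nbhd_split:
  assumes "compact_space T" "Hausdorff_space T"
    and U: "openin (prod_topology T T) U" and diag: "\<And>z. z \<in> topspace T \<Longrightarrow> (z, z) \<in> U"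
  obtains V where "openin (prod_topology T T) V" "\<And>z. z \<in> topspace T \<Longrightarrow> (z, z) \<in> V"
    "\<And>a b c. (a, b) \<in> V \<Longrightarrow> (b, c) \<in> V \<Longrightarrow> (a, c) \<in> U"
proof -
  let ?C = "topspace T \<times> topspace T - U"
  define obstructs where "obstructs B K \<longleftrightarrow> closedin (prod_topology T T) K \<and> (\<forall>z. (z, z) \<notin> K) \<and>
    (\<forall>a b c. (a, c) \<in> B \<longrightarrow> b \<in> topspace T \<longrightarrow> (a, b) \<in> K \<or> (b, c) \<in> K)" for B K
  have "closedin (prod_topology T T) ?C"
    using closedin_diff[OF closedin_topspace U] by (simp add: topspace_prod_topology)
  then have "compactin (prod_topology T T) ?C"
    using assms(1) by (simp add: closedin_compact_space compact_space_prod_topology)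
  moreover have "?C \<subseteq> \<Union>{B. openin (prod_topology T T) B \<and> (\<exists>K. obstructs B K)}"
  proof
    fix p assume p: "p \<in> ?C"
    then obtain x y where xy: "p = (x, y)" "x \<in> topspace T" "y \<in> topspace T" "x \<noteq> y"
      using diag by (cases p) auto
    obtain P R K where PR: "openin T P" "openin T R" "x \<in> P" "y \<in> R"
      and K: "closedin (prod_topology T T) K" "\<And>z. (z, z) \<notin> K"
        "\<And>a b c. a \<in> P \<Longrightarrow> c \<in> R \<Longrightarrow> b \<in> topspace T \<Longrightarrow> (a, b) \<in> K \<or> (b, c) \<in> K"
      using regular_Hausdorff_chain_obstruction[OF compact_Hausdorff_imp_regular_space[OF assms(1,2)] assms(2) xy(2-4)]
      by blast
    have "obstructs (P \<times> R) K"
      unfolding obstructs_def using K by blast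
    then have "openin (prod_topology T T) (P \<times> R) \<and> (\<exists>K. obstructs (P \<times> R) K)" "p \<in> P \<times> R"
      using xy(1) PR by (auto simp: openin_prod_Times_iff)
    then show "p \<in> \<Union>{B. openin (prod_topology T T) B \<and> (\<exists>K. obstructs B K)}"
      by blast
  qed
  ultimately have "\<exists>\<B>. finite \<B> \<and> \<B> \<subseteq> {B. openin (prod_topology T T) B \<and> (\<exists>K. obstructs B K)} \<and>
    ?C \<subseteq> \<Union>\<B>"
    by (intro compactinD) auto
  then obtain \<B> where \<B>: "finite \<B>" "\<B> \<subseteq> {B. openin (prod_topology T T) B \<and> (\<exists>K. obstructs B K)}"
    "?C \<subseteq> \<Union>\<B>"
    by blast
  then have "\<forall>B\<in>\<B>. \<exists>K. obstructs B K"
    by blast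
  then obtain K where K: "\<And>B. B \<in> \<B> \<Longrightarrow> obstructs B (K B)"
    using bchoice[of \<B> obstructs] by blast
  define V where "V = topspace T \<times> topspace T - \<Union>(K ` \<B>)"
  show thesis
  proof (rule that)
    have "closedin (prod_topology T T) (\<Union>(K ` \<B>))"
      using K \<B>(1) unfolding obstructs_def by (intro closedin_Union) auto
    then show "openin (prod_topology T T) V"
      unfolding V_def using openin_diff[OF openin_topspace] by (metis topspace_prod_topology)
    show "(z, z) \<in> V" if "z \<in> topspace T" for z
      using that K unfolding V_def obstructs_def by blast
    show "(a, c) \<in> U" if ab: "(a, b) \<in> V" and bc: "(b, c) \<in> V" for a b c
    proof (rule ccontr)
      assume "(a, c) \<notin> U"
      moreover have "a \<in> topspace T" "b \<in> topspace T" "c \<in> topspace T"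
        using ab bc unfolding V_def by auto
      ultimately obtain B where "B \<in> \<B>" "(a, c) \<in> B"
        using \<B>(3) by blast
      then have "(a, b) \<in> K B \<or> (b, c) \<in> K B"
        using K \<open>b \<in> topspace T\<close> unfolding obstructs_def by blast
      then show False
        using ab bc \<open>B \<in> \<B>\<close> unfolding V_def by blast
    qed
  qed
qed

lemma compact_uniformity_split3:
  assumes "compact_space T" "Hausdorff_space T" "u \<in> compact_uniformity T"
  obtains V where "openin (prod_topology T T) V" "\<And>z. z \<in> topspace T \<Longrightarrow> (z, z) \<in> V"
    "\<And>a b c d. (a, b) \<in> V \<Longrightarrow> (b, c) \<in> V \<Longrightarrow> (c, d) \<in> V \<Longrightarrow> (a, d) \<in> u"
proof -
  obtain U where U: "openin (prod_topology T T) U" "\<And>z. z \<in> topspace T \<Longrightarrow> (z, z) \<in> U" "U \<subseteq> u"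
    using assms(3) unfolding compact_uniformity_def by blast
  obtain V1 where V1: "openin (prod_topology T T) V1" "\<And>z. z \<in> topspace T \<Longrightarrow> (z, z) \<in> V1"
    "\<And>a b c. (a, b) \<in> V1 \<Longrightarrow> (b, c) \<in> V1 \<Longrightarrow> (a, c) \<in> U"
    using compact_Hausdorff_diagonal_nbhd_split[OF assms(1,2) U(1)] U(2) by metis
  obtain V where V: "openin (prod_topology T T) V" "\<And>z. z \<in> topspace T \<Longrightarrow> (z, z) \<in> V"
    "\<And>a b c. (a, b) \<in> V \<Longrightarrow> (b, c) \<in> V \<Longrightarrow> (a, c) \<in> V1"
    using compact_Hausdorff_diagonal_nbhd_split[OF assms(1,2) V1(1)] V1(2) by metis
  show thesis
  proof (rule that[OF V(1,2)])
    fix a b c d assume "(a, b) \<in> V" "(b, c) \<in> V" "(c, d) \<in> V"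
    moreover from this(3) have "d \<in> topspace T"
      using openin_subset[OF V(1)] by (auto simp: topspace_prod_topology)
    ultimately have "(a, c) \<in> V1" "(c, d) \<in> V1"
      using V(2,3) by blast+
    then show "(a, d) \<in> u"
      using V1(3) U(3) by blast
  qed
qed

lemma compact_uniformity_preimage:
  assumes g: "continuous_map T T' g" and V: "openin (prod_topology T' T') V"
    and diag: "\<And>z. z \<in> topspace T' \<Longrightarrow> (z, z) \<in> V"
  shows "{p \<in> topspace (prod_topology T T). (g (fst p), g (snd p)) \<in> V} \<in> compact_uniformity T"
  unfolding compact_uniformity_def
proof (intro CollectI conjI exI)
  have "continuous_map (prod_topology T T) (prod_topology T' T') (\<lambda>p. (g (fst p), g (snd p)))"
    using continuous_map_compose[OF continuous_map_fst g] continuous_map_compose[OF continuous_map_snd g]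
    by (intro continuous_map_pairedI) (simp_all add: o_def)
  then show "openin (prod_topology T T) {p \<in> topspace (prod_topology T T). (g (fst p), g (snd p)) \<in> V}"
    using openin_continuous_map_preimage V by blast
  show "{(z, z) |z. z \<in> topspace T} \<subseteq> {p \<in> topspace (prod_topology T T). (g (fst p), g (snd p)) \<in> V}"
    using diag continuous_map_image_subset_topspace[OF g] by (auto simp: topspace_prod_topology)
qed (auto simp: topspace_prod_topology)


lemma compact_uniformity_separating:
  assumes "regular_space T" "closedin T C" "z \<in> topspace T - C"
  obtains V u where "openin T V" "z \<in> V" "u \<in> compact_uniformity T"
    "\<And>a b. a \<in> V \<Longrightarrow> b \<in> C \<Longrightarrow> (a, b) \<notin> u"
proof -
  obtain V where V: "openin T V" "z \<in> V" "disjnt C (T closure_of V)"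
    using assms unfolding regular_space by blast
  let ?u = "topspace T \<times> topspace T - (T closure_of V) \<times> C"
  show thesis
  proof (rule that[OF V(1,2), of ?u])
    show "?u \<in> compact_uniformity T"
      unfolding compact_uniformity_def
    proof (intro CollectI conjI exI[of _ ?u])
      show "openin (prod_topology T T) ?u"
        using openin_diff[OF openin_topspace, of "prod_topology T T" "(T closure_of V) \<times> C"] assms(2)
        by (simp add: closedin_prod_Times_iff topspace_prod_topology)
      show "{(z, z) |z. z \<in> topspace T} \<subseteq> ?u"
        using V(3) unfolding disjnt_def by blast
    qed auto
    show "(a, b) \<notin> ?u" if "a \<in> V" "b \<in> C" for a b
      using that closure_of_subset[OF openin_subset[OF V(1)]] by blast
  qed
qed

section \<open>Bounded coarse structures and coarse arcs\<close>

lemma (in Metric_space) coarse_bounded_iff_mbounded: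
  assumes "B \<subseteq> M"
  shows "coarse_bounded (bounded_coarse M d) B \<longleftrightarrow> mbounded B"
proof
  assume "coarse_bounded (bounded_coarse M d) B"
  then obtain r where r: "\<And>a b. a \<in> B \<Longrightarrow> b \<in> B \<Longrightarrow> d a b \<le> r"
    unfolding coarse_bounded_def bounded_coarse_def by auto
  show "mbounded B"
  proof (cases "B = {}")
    case False
    then obtain c where "c \<in> B"
      by blast
    then have "B \<subseteq> mcball c r"
      using r assms by auto
    then show ?thesis
      by (auto simp: mbounded_def)
  qed simp
next
  assume "mbounded B"
  then obtain c r where cr: "B \<subseteq> mcball c r"
    unfolding mbounded_def by auto
  have "d a b \<le> 2 * r" if "a \<in> B" "b \<in> B" for a b
  proof -
    have "a \<in> M" "b \<in> M" "c \<in> M" "d c a \<le> r" "d c b \<le> r"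
      using that cr by auto
    then show ?thesis
      using triangle[of a c b] commute[of a c] by linarith
  qed
  then show "coarse_bounded (bounded_coarse M d) B"
    unfolding coarse_bounded_def bounded_coarse_def using assms by blast
qed

lemma coarse_map_bornologous:
  assumes "coarse_map MA (bounded_coarse MA dA) MB (bounded_coarse MB dB) g"
  obtains s' where "\<And>a a'. a \<in> MA \<Longrightarrow> a' \<in> MA \<Longrightarrow> dA a a' \<le> s \<Longrightarrow> dB (g a) (g a') \<le> s'"
proof -
  let ?E = "{(a, a'). a \<in> MA \<and> a' \<in> MA \<and> dA a a' \<le> s}"
  have "?E \<in> bounded_coarse MA dA"
    unfolding bounded_coarse_def by auto
  then have "(\<lambda>(a, a'). (g a, g a')) ` ?E \<in> bounded_coarse MB dB"
    using assms unfolding coarse_map_def by blast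
  then obtain s' where "\<forall>(b, b')\<in>(\<lambda>(a, a'). (g a, g a')) ` ?E. dB b b' \<le> s'"
    unfolding bounded_coarse_def by blast
  then show thesis
    by (intro that[of s']) auto
qed

lemma coarse_map_mbounded_preimage:
  assumes "Metric_space MA dA" "Metric_space MB dB"
    and g: "coarse_map MA (bounded_coarse MA dA) MB (bounded_coarse MB dB) g"
    and "Metric_space.mbounded MB dB S"
  shows "Metric_space.mbounded MA dA {a \<in> MA. g a \<in> S}"
proof -
  have "S \<subseteq> MB"
    using assms(2,4) Metric_space.mbounded_subset_mspace by blast
  then have "coarse_bounded (bounded_coarse MB dB) S"
    using Metric_space.coarse_bounded_iff_mbounded[OF assms(2)] assms(4) by blast
  then have "coarse_bounded (bounded_coarse MA dA) {a \<in> MA. g a \<in> S}"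
    using g \<open>S \<subseteq> MB\<close> unfolding coarse_map_def by blast
  then show ?thesis
    using Metric_space.coarse_bounded_iff_mbounded[OF assms(1), of "{a \<in> MA. g a \<in> S}"] by auto
qed

lemma coarse_map_mbounded_image:
  assumes "Metric_space MA dA" "Metric_space MB dB"
    and g: "coarse_map MA (bounded_coarse MA dA) MB (bounded_coarse MB dB) g"
    and "Metric_space.mbounded MA dA S"
  shows "Metric_space.mbounded MB dB (g ` S)"
proof -
  have S: "S \<subseteq> MA"
    using assms(1,4) Metric_space.mbounded_subset_mspace by blast
  then have "S \<times> S \<in> bounded_coarse MA dA"
    using Metric_space.coarse_bounded_iff_mbounded[OF assms(1) S] assms(4)
    unfolding coarse_bounded_def by blast
  then have "(\<lambda>(a, a'). (g a, g a')) ` (S \<times> S) \<in> bounded_coarse MB dB"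
    using g unfolding coarse_map_def by blast
  moreover have "(\<lambda>(a, a'). (g a, g a')) ` (S \<times> S) = g ` S \<times> g ` S"
    by auto
  moreover have "g ` S \<subseteq> MB"
    using g S unfolding coarse_map_def by blast
  ultimately show ?thesis
    using Metric_space.coarse_bounded_iff_mbounded[OF assms(2), of "g ` S"]
    unfolding coarse_bounded_def by auto
qed

lemma close_maps_bounded_coarse:
  assumes "close_maps M (bounded_coarse N e) g h"
  obtains K where "0 \<le> K" "\<And>x. x \<in> M \<Longrightarrow> e (g x) (h x) \<le> K"
proof -
  obtain K where "\<forall>(a, b)\<in>(\<lambda>x. (g x, h x)) ` M. e a b \<le> K"
    using assms unfolding close_maps_def bounded_coarse_def by blast
  then show thesis
    by (intro that[of "max K 0"]) auto
qed

lemma (in Metric_space) mbounded_thickening: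
  assumes "mbounded S"
  shows "mbounded {x \<in> M. \<exists>z\<in>S. d x z < r}"
proof -
  obtain c B where cB: "S \<subseteq> mcball c B"
    using assms mbounded_def by blast
  have "{x \<in> M. \<exists>z\<in>S. d x z < r} \<subseteq> mcball c (B + r)"
  proof
    fix x assume "x \<in> {x \<in> M. \<exists>z\<in>S. d x z < r}"
    then obtain z where z: "x \<in> M" "z \<in> S" "d x z < r"
      by blast
    then have "c \<in> M" "z \<in> M" "d c z \<le> B"
      using cB by auto
    then show "x \<in> mcball c (B + r)"
      using triangle[of c z x] commute[of x z] z by auto
  qed
  then show ?thesis
    using mbounded_def by blast
qed


locale Proper_metric_space = Metric_space +
  assumes proper: "proper_metric_space M d"
begin

lemma compactin_mcball: "compactin mtopology (mcball x r)"
  using proper unfolding proper_metric_space_def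
  by (cases "x \<in> M") (auto simp: mcball_def)

lemma compactin_iff_closedin_mbounded: "compactin mtopology S \<longleftrightarrow> closedin mtopology S \<and> mbounded S"
proof
  assume "closedin mtopology S \<and> mbounded S"
  then show "compactin mtopology S"
    unfolding mbounded_def using closed_compactin compactin_mcball by blast
qed (simp add: compactin_imp_closedin compactin_imp_mbounded Hausdorff_space_mtopology)

end

lemma equicoarse_uniformly_bornologous:
  assumes "equicoarse d \<Upsilon>" "r > 0"
  obtains s where "s > 0"
    "\<And>t l a b. (t, l) \<in> \<Upsilon> \<Longrightarrow> a \<in> {0..t} \<Longrightarrow> b \<in> {0..t} \<Longrightarrow> \<bar>a - b\<bar> < r \<Longrightarrow> d (l a) (l b) < s"
proof -
  obtain s where "s > 0" and s: "\<forall>(t, l)\<in>\<Upsilon>. \<forall>a\<in>{0..t}. \<forall>b\<in>{0..t}. \<bar>a - b\<bar> < r \<longrightarrow> d (l a) (l b) < s"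
    using assms unfolding equicoarse_def by blast
  show thesis
    by (rule that[OF \<open>s > 0\<close>]) (use bspec[OF s] in auto)
qed

lemma equicoarse_uniformly_proper:
  assumes "equicoarse d \<Upsilon>" "r > 0"
  obtains s where "s > 0"
    "\<And>t l a b. (t, l) \<in> \<Upsilon> \<Longrightarrow> a \<in> {0..t} \<Longrightarrow> b \<in> {0..t} \<Longrightarrow> d (l a) (l b) < r \<Longrightarrow> \<bar>a - b\<bar> < s"
proof -
  obtain s where "s > 0" and s: "\<forall>(t, l)\<in>\<Upsilon>. \<forall>a\<in>{0..t}. \<forall>b\<in>{0..t}. d (l a) (l b) < r \<longrightarrow> \<bar>a - b\<bar> < s"
    using assms unfolding equicoarse_def by blast
  show thesis
    by (rule that[OF \<open>s > 0\<close>]) (use bspec[OF s] in auto)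
qed


lemma equicoarse_arc_near_start:
  assumes equi: "equicoarse d \<Upsilon>"
  obtains s where "\<And>a b t l c. (t, l) \<in> \<Upsilon> \<Longrightarrow> coarse_arc M d a b (t, l) \<Longrightarrow> d a b \<le> R \<Longrightarrow>
    c \<in> {0..t} \<Longrightarrow> d a (l c) < s"
proof -
  have "\<bar>R\<bar> + 1 > 0"
    by simp
  then obtain s1 where "s1 > 0" and s1: "\<And>t l a b. (t, l) \<in> \<Upsilon> \<Longrightarrow> a \<in> {0..t} \<Longrightarrow> b \<in> {0..t} \<Longrightarrow>
      d (l a) (l b) < \<bar>R\<bar> + 1 \<Longrightarrow> \<bar>a - b\<bar> < s1"
    by (rule equicoarse_uniformly_proper[OF equi]) blast
  obtain s2 where s2: "\<And>t l a b. (t, l) \<in> \<Upsilon> \<Longrightarrow> a \<in> {0..t} \<Longrightarrow> b \<in> {0..t} \<Longrightarrow>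
      \<bar>a - b\<bar> < s1 \<Longrightarrow> d (l a) (l b) < s2"
    by (rule equicoarse_uniformly_bornologous[OF equi \<open>s1 > 0\<close>]) blast
  show thesis
  proof (rule that[of s2])
    fix a b t l c
    assume tl: "(t, l) \<in> \<Upsilon>" and arc: "coarse_arc M d a b (t, l)" and ab: "d a b \<le> R"
      and c: "c \<in> {0..t}"
    have t: "0 \<le> t" and l: "l 0 = a" "l t = b"
      using arc unfolding coarse_arc_def coarse_embedding_interval_def by auto
    have "d (l 0) (l t) < \<bar>R\<bar> + 1"
      using ab l by simp
    then have "\<bar>0 - t\<bar> < s1"
      using s1[OF tl, of 0 t] t by simp
    then have "\<bar>0 - c\<bar> < s1"
      using c by auto
    then show "d a (l c) < s2"
      using s2[OF tl, of 0 c] c t l by simp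
  qed
qed

lemma equicoarse_imp_coarse_embedding_interval:
  assumes "equicoarse d \<Upsilon>" "(t, l) \<in> \<Upsilon>" "0 \<le> t" "l ` {0..t} \<subseteq> M"
  shows "coarse_embedding_interval M d t l"
  unfolding coarse_embedding_interval_def
proof (intro conjI allI impI)
  fix r :: real assume "r > 0"
  then obtain s where "s > 0"
    "\<And>a b. a \<in> {0..t} \<Longrightarrow> b \<in> {0..t} \<Longrightarrow> \<bar>a - b\<bar> < r \<Longrightarrow> d (l a) (l b) < s"
    using equicoarse_uniformly_bornologous[OF assms(1)] assms(2) by metis
  then show "\<exists>s>0. \<forall>a\<in>{0..t}. \<forall>b\<in>{0..t}. \<bar>a - b\<bar> < r \<longrightarrow> d (l a) (l b) < s"
    by blast
next
  fix r :: real assume "r > 0"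
  then obtain s where "s > 0"
    "\<And>a b. a \<in> {0..t} \<Longrightarrow> b \<in> {0..t} \<Longrightarrow> d (l a) (l b) < r \<Longrightarrow> \<bar>a - b\<bar> < s"
    using equicoarse_uniformly_proper[OF assms(1)] assms(2) by metis
  then show "\<exists>s>0. \<forall>a\<in>{0..t}. \<forall>b\<in>{0..t}. d (l a) (l b) < r \<longrightarrow> \<bar>a - b\<bar> < s"
    by blast
qed (use assms in auto)

lemma dist_le_min_dist:
  fixes a b t :: real
  assumes "a \<in> {0..t + 1}" "b \<in> {0..t + 1}"
  shows "\<bar>a - b\<bar> \<le> \<bar>min a t - min b t\<bar> + 1"
  using assms by (auto simp: min_def abs_if)

section \<open>The coarse Karlsson property\<close>

locale coarse_Karlsson_space = Proper_metric_space +
  fixes W :: "'w topology" and f :: "'a set \<Rightarrow> 'w set"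
  assumes coarse_karlsson: "coarse_karlsson M d W f"
begin

abbreviation compactification :: "('a + 'w) topology"
  where "compactification \<equiv> plus_topology mtopology W f"

lemma is_compactification: "is_compactification mtopology W f"
  using coarse_karlsson unfolding coarse_karlsson_def Let_def by blast

lemma admissible: "admissible_map mtopology W f"
  using is_compactification unfolding is_compactification_def by blast

lemma Karlsson_arcs:
  obtains \<Upsilon> where "equicoarse d \<Upsilon>" "\<And>x y. x \<in> M \<Longrightarrow> y \<in> M \<Longrightarrow> \<exists>ar\<in>\<Upsilon>. coarse_arc M d x y ar"
    "\<And>u. u \<in> compact_uniformity compactification \<Longrightarrow>
       \<exists>S. mbounded S \<and> (\<forall>(t, l)\<in>\<Upsilon>. l ` {0..t} \<inter> S = {} \<longrightarrow> small_for u (Inl ` l ` {0..t}))"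
proof -
  obtain \<Upsilon> where "equicoarse d \<Upsilon>" and arcs: "\<forall>x\<in>M. \<forall>y\<in>M. \<exists>ar\<in>\<Upsilon>. coarse_arc M d x y ar"
    and small: "\<forall>u\<in>compact_uniformity compactification. \<exists>S. S \<subseteq> M \<and> mbounded S \<and>
      (\<forall>(t, l)\<in>\<Upsilon>. l ` {0..t} \<inter> S = {} \<longrightarrow> small_for u (Inl ` l ` {0..t}))"
    using coarse_karlsson unfolding coarse_karlsson_def Let_def by blast
  show thesis
  proof (rule that[OF \<open>equicoarse d \<Upsilon>\<close>])
    show "\<exists>ar\<in>\<Upsilon>. coarse_arc M d x y ar" if "x \<in> M" "y \<in> M" for x y
      using arcs that by blast
    show "\<exists>S. mbounded S \<and> (\<forall>(t, l)\<in>\<Upsilon>. l ` {0..t} \<inter> S = {} \<longrightarrow> small_for u (Inl ` l ` {0..t}))"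
      if "u \<in> compact_uniformity compactification" for u
      using small that by blast
  qed
qed

lemma close_pairs_small_off_bounded:
  assumes "u \<in> compact_uniformity compactification"
  obtains S where "mbounded S"
    "\<And>a b. a \<in> M \<Longrightarrow> b \<in> M \<Longrightarrow> d a b \<le> R \<Longrightarrow> a \<notin> S \<Longrightarrow> (Inl a, Inl b) \<in> u"
proof -
  obtain \<Upsilon> where equi: "equicoarse d \<Upsilon>" and arcs: "\<And>x y. x \<in> M \<Longrightarrow> y \<in> M \<Longrightarrow> \<exists>ar\<in>\<Upsilon>. coarse_arc M d x y ar"
    and small: "\<And>u. u \<in> compact_uniformity compactification \<Longrightarrow>
      \<exists>S. mbounded S \<and> (\<forall>(t, l)\<in>\<Upsilon>. l ` {0..t} \<inter> S = {} \<longrightarrow> small_for u (Inl ` l ` {0..t}))"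
    by (rule Karlsson_arcs) blast
  obtain S0 where "mbounded S0" and S0: "\<forall>(t, l)\<in>\<Upsilon>. l ` {0..t} \<inter> S0 = {} \<longrightarrow> small_for u (Inl ` l ` {0..t})"
    using small[OF assms] by blast
  obtain s where s: "\<And>a b t l c. (t, l) \<in> \<Upsilon> \<Longrightarrow> coarse_arc M d a b (t, l) \<Longrightarrow> d a b \<le> R \<Longrightarrow>
      c \<in> {0..t} \<Longrightarrow> d a (l c) < s"
    by (rule equicoarse_arc_near_start[OF equi]) blast
  show thesis
  proof (rule that[OF mbounded_thickening[OF \<open>mbounded S0\<close>, of s]])
    fix a b assume a: "a \<in> M" and b: "b \<in> M" and ab: "d a b \<le> R"
      and far: "a \<notin> {x \<in> M. \<exists>z\<in>S0. d x z < s}"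
    obtain ar where "ar \<in> \<Upsilon>" "coarse_arc M d a b ar"
      using arcs a b by blast
    then obtain t l where tl: "(t, l) \<in> \<Upsilon>" "coarse_arc M d a b (t, l)"
      by (cases ar) blast
    then have "l ` {0..t} \<inter> S0 = {}"
      using s[OF tl ab] a far by blast
    then have "small_for u (Inl ` l ` {0..t})"
      using bspec[OF S0 tl(1)] by simp
    moreover have "0 \<le> t" "l 0 = a" "l t = b"
      using tl(2) unfolding coarse_arc_def coarse_embedding_interval_def by auto
    ultimately show "(Inl a, Inl b) \<in> u"
      unfolding small_for_def by force
  qed
qed

(* If w \<in> f B - f A, a uniform neighbourhood separates Inr w from the closure Inl ` A \<union> Inr ` f A;
   but points of B near Inr w lie far out and within R of A, so they are uniformly close to it. *)
lemma boundary_subset_if_near: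
  assumes A: "closedin mtopology A" and B: "closedin mtopology B"
    and near: "\<And>b. b \<in> B \<Longrightarrow> \<exists>a\<in>A. d a b \<le> R"
  shows "f B \<subseteq> f A"
proof
  fix w assume "w \<in> f B"
  show "w \<in> f A"
  proof (rule ccontr)
    assume "w \<notin> f A"
    let ?Z = compactification
    have C: "?Z closure_of (Inl ` A) = Inl ` A \<union> Inr ` f A"
      by (rule closure_of_plus_topology_Inl_image[OF admissible A])
    have "compact_space ?Z" "Hausdorff_space ?Z"
      using is_compactification unfolding is_compactification_def by blast+
    then have reg: "regular_space ?Z"
      by (rule compact_Hausdorff_imp_regular_space)
    have closed: "closedin ?Z (Inl ` A \<union> Inr ` f A)"
      using C by (metis closedin_closure_of)
    have w: "Inr w \<in> topspace ?Z - (Inl ` A \<union> Inr ` f A)"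
      using \<open>w \<in> f B\<close> \<open>w \<notin> f A\<close> admissible_map_subset_topspace[OF admissible B]
      by (auto simp: topspace_plus_topology[OF admissible])
    obtain V u where V: "openin ?Z V" "Inr w \<in> V" and u: "u \<in> compact_uniformity ?Z"
      and apart: "\<And>p q. p \<in> V \<Longrightarrow> q \<in> Inl ` A \<union> Inr ` f A \<Longrightarrow> (p, q) \<notin> u"
      by (rule compact_uniformity_separating[OF reg closed w]) auto
    obtain S where "mbounded S"
      and S: "\<And>a b. a \<in> M \<Longrightarrow> b \<in> M \<Longrightarrow> d a b \<le> R \<Longrightarrow> a \<notin> S \<Longrightarrow> (Inl a, Inl b) \<in> u"
      by (rule close_pairs_small_off_bounded[OF u]) auto
    then obtain c r where "S \<subseteq> mcball c r"
      unfolding mbounded_def by blast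
    have "closedin ?Z (Inl ` mcball c r)"
      using compactification_boundary_compactin_empty[OF is_compactification compactin_mcball]
        closedin_plus_topology_Inl_image[OF admissible] by blast
    then have "openin ?Z (V - Inl ` mcball c r)"
      using V(1) by blast
    moreover have "Inr w \<in> V - Inl ` mcball c r"
      using V(2) by blast
    moreover have "Inr w \<in> ?Z closure_of (Inl ` B)"
      using \<open>w \<in> f B\<close> by (simp add: closure_of_plus_topology_Inl_image[OF admissible B])
    ultimately obtain b where b: "b \<in> B" "Inl b \<in> V" "b \<notin> mcball c r"
      unfolding in_closure_of by blast
    then obtain a where a: "a \<in> A" "d a b \<le> R"
      using near by blast
    moreover have "a \<in> M" "b \<in> M"
      using a(1) b(1) closedin_subset[OF A] closedin_subset[OF B] by auto
    moreover have "b \<notin> S" "d b a \<le> R"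
      using b(3) \<open>S \<subseteq> mcball c r\<close> a(2) commute by auto
    ultimately have "(Inl b, Inl a) \<in> u"
      using S by blast
    then show False
      using apart[OF b(2)] a(1) by blast
  qed
qed

end

section \<open>Transfer along a coarse equivalence\<close>

locale coarse_Karlsson_transfer =
  X: coarse_Karlsson_space MX dX W f + Y: Proper_metric_space MY dY
  for MX :: "'x set" and dX and W :: "'w topology" and f and MY :: "'y set" and dY +
  fixes \<pi> :: "'y \<Rightarrow> 'x" and \<rho> :: "'x \<Rightarrow> 'y"
  assumes continuous_\<pi>: "continuous_map Y.mtopology X.mtopology \<pi>"
    and continuous_\<rho>: "continuous_map X.mtopology Y.mtopology \<rho>"
    and coarse_\<pi>: "coarse_map MY (bounded_coarse MY dY) MX (bounded_coarse MX dX) \<pi>"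
    and quasi_inverse: "coarse_quasi_inverse MY (bounded_coarse MY dY) MX (bounded_coarse MX dX) \<pi> \<rho>"
begin

abbreviation f_star :: "'y set \<Rightarrow> 'w set"
  where "f_star \<equiv> pull_admissible X.mtopology W f \<pi>"

abbreviation pulled_compactification :: "('y + 'w) topology"
  where "pulled_compactification \<equiv> plus_topology Y.mtopology W f_star"

lemma coarse_\<rho>: "coarse_map MX (bounded_coarse MX dX) MY (bounded_coarse MY dY) \<rho>"
  using quasi_inverse unfolding coarse_quasi_inverse_def by blast

lemma \<pi>_in: "y \<in> MY \<Longrightarrow> \<pi> y \<in> MX"
  using coarse_\<pi> unfolding coarse_map_def by blast

lemma \<rho>_in: "x \<in> MX \<Longrightarrow> \<rho> x \<in> MY"
  using coarse_\<rho> unfolding coarse_map_def by blast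

lemma \<pi>\<rho>_close:
  obtains K where "0 \<le> K" "\<And>x. x \<in> MX \<Longrightarrow> dX (\<pi> (\<rho> x)) x \<le> K"
  using quasi_inverse close_maps_bounded_coarse[of MX MX dX "\<pi> \<circ> \<rho>" id]
  unfolding coarse_quasi_inverse_def by auto

lemma \<rho>\<pi>_close:
  obtains K where "0 \<le> K" "\<And>y. y \<in> MY \<Longrightarrow> dY (\<rho> (\<pi> y)) y \<le> K"
  using quasi_inverse close_maps_bounded_coarse[of MY MY dY "\<rho> \<circ> \<pi>" id]
  unfolding coarse_quasi_inverse_def by auto

lemma admissible_f_star: "admissible_map Y.mtopology W f_star"
  by (rule admissible_map_pull_admissible[OF X.admissible])

lemma f_star_preimage_subset:
  assumes "closedin X.mtopology C"
  shows "f_star {y \<in> MY. \<pi> y \<in> C} \<subseteq> f C"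
proof -
  have "X.mtopology closure_of (\<pi> ` {y \<in> MY. \<pi> y \<in> C}) \<subseteq> C"
    using assms by (intro closure_of_minimal) auto
  then have "f (X.mtopology closure_of (\<pi> ` {y \<in> MY. \<pi> y \<in> C})) \<subseteq> f C"
    by (rule admissible_map_mono[OF X.admissible closedin_closure_of assms])
  moreover have "closedin W (f C)"
    using X.admissible assms unfolding admissible_map_def by blast
  ultimately show ?thesis
    unfolding pull_admissible_def by (rule closure_of_minimal)
qed

lemma boundary_subset_f_star:
  assumes "closedin Y.mtopology A"
  shows "f {x \<in> MX. \<rho> x \<in> A} \<subseteq> f_star A"
proof -
  obtain K where K: "\<And>x. x \<in> MX \<Longrightarrow> dX (\<pi> (\<rho> x)) x \<le> K"
    using \<pi>\<rho>_close by blast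
  let ?A = "X.mtopology closure_of (\<pi> ` A)"
  have "closedin X.mtopology {x \<in> MX. \<rho> x \<in> A}"
    using closedin_continuous_map_preimage[OF continuous_\<rho> assms] by simp
  moreover have "\<exists>a\<in>?A. dX a x \<le> K" if "x \<in> {x \<in> MX. \<rho> x \<in> A}" for x
  proof -
    have "\<pi> ` A \<subseteq> topspace X.mtopology"
      using closedin_subset[OF assms] \<pi>_in by auto
    then have "\<pi> (\<rho> x) \<in> ?A"
      using that closure_of_subset by blast
    then show ?thesis
      using K that by blast
  qed
  ultimately have "f {x \<in> MX. \<rho> x \<in> A} \<subseteq> f ?A"
    by (intro X.boundary_subset_if_near) auto
  also have "\<dots> \<subseteq> f_star A"
    unfolding pull_admissible_def
    using admissible_map_subset_topspace[OF X.admissible closedin_closure_of] by (rule closure_of_subset)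
  finally show ?thesis .
qed

lemma continuous_map_\<pi>_plus:
  "continuous_map pulled_compactification X.compactification (case_sum (Inl \<circ> \<pi>) Inr)"
  using continuous_map_plus_topology[OF admissible_f_star X.admissible continuous_\<pi>]
    f_star_preimage_subset by simp

lemma continuous_map_\<rho>_plus:
  "continuous_map X.compactification pulled_compactification (case_sum (Inl \<circ> \<rho>) Inr)"
  using continuous_map_plus_topology[OF X.admissible admissible_f_star continuous_\<rho>]
    boundary_subset_f_star by simp

lemma f_star_compactin_empty:
  assumes "compactin Y.mtopology K"
  shows "f_star K = {}"
proof -
  have "compactin X.mtopology (\<pi> ` K)"
    using image_compactin[OF assms continuous_\<pi>] .
  then have "X.mtopology closure_of (\<pi> ` K) = \<pi> ` K" "f (\<pi> ` K) = {}"
    using compactification_boundary_compactin_empty[OF X.is_compactification]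
      compactin_imp_closedin[OF X.Hausdorff_space_mtopology] closure_of_closedin by blast+
  then show ?thesis
    unfolding pull_admissible_def by simp
qed

lemma mbounded_if_boundary_disjoint:
  assumes "closedin pulled_compactification D" "Inr -` D = {}"
  shows "Y.mbounded (Inl -` D)"
proof -
  let ?A = "X.mtopology closure_of (\<pi> ` (Inl -` D))"
  have D: "Inl -` D \<subseteq> MY" "Inr ` f_star (Inl -` D) \<subseteq> D"
    using assms(1) unfolding closedin_plus_topology[OF admissible_f_star] by auto
  then have "W closure_of f ?A = {}"
    using assms(2) unfolding pull_admissible_def by blast
  then have "f ?A = {}"
    using admissible_map_subset_topspace[OF X.admissible closedin_closure_of]
    by (simp add: closure_of_eq_empty)
  then have "compactin X.mtopology ?A"
    using compactification_compactin_if_boundary_empty[OF X.is_compactification closedin_closure_of] by blast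
  then have "Y.mbounded {y \<in> MY. \<pi> y \<in> ?A}"
    using coarse_map_mbounded_preimage[OF Y.Metric_space_axioms X.Metric_space_axioms coarse_\<pi>]
      X.compactin_imp_mbounded by blast
  moreover have "Inl -` D \<subseteq> {y \<in> MY. \<pi> y \<in> ?A}"
    using D(1) \<pi>_in closure_of_subset[of "\<pi> ` (Inl -` D)" X.mtopology] by auto
  ultimately show ?thesis
    using Y.mbounded_subset by blast
qed

(* Parametrised by [0, t + 1]: the extra unit keeps the endpoints y1 and y2 apart even if t = 0. *)
definition lifted_arc :: "'y \<Rightarrow> 'y \<Rightarrow> real \<Rightarrow> (real \<Rightarrow> 'x) \<Rightarrow> real \<Rightarrow> 'y"
  where "lifted_arc y1 y2 t l a = (if a = 0 then y1 else if a = t + 1 then y2 else \<rho> (l (min a t)))"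

definition lifted_arcs :: "(real \<times> (real \<Rightarrow> 'x)) set \<Rightarrow> (real \<times> (real \<Rightarrow> 'y)) set"
  where "lifted_arcs \<Upsilon> = {(t + 1, lifted_arc y1 y2 t l) | y1 y2 t l.
    y1 \<in> MY \<and> y2 \<in> MY \<and> (t, l) \<in> \<Upsilon> \<and> coarse_arc MX dX (\<pi> y1) (\<pi> y2) (t, l)}"

lemma lifted_arc_cases:
  assumes "coarse_arc MX dX (\<pi> y1) (\<pi> y2) (t, l)" "a \<in> {0..t + 1}"
  shows "lifted_arc y1 y2 t l a = \<rho> (l (min a t)) \<or>
    (\<exists>y\<in>{y1, y2}. lifted_arc y1 y2 t l a = y \<and> l (min a t) = \<pi> y)"
proof -
  have "0 \<le> t" "l 0 = \<pi> y1" "l t = \<pi> y2"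
    using assms(1) unfolding coarse_arc_def coarse_embedding_interval_def by auto
  then show ?thesis
    using assms(2) unfolding lifted_arc_def by auto
qed

lemma lifted_arc_endpoints:
  assumes "0 \<le> t"
  shows "lifted_arc y1 y2 t l 0 = y1" "lifted_arc y1 y2 t l (t + 1) = y2"
  using assms unfolding lifted_arc_def by auto


lemma coarse_arc_clamped_point:
  assumes "coarse_arc MX dX (\<pi> y1) (\<pi> y2) (t, l)" "a \<in> {0..t + 1}"
  shows "min a t \<in> {0..t}" "l (min a t) \<in> MX"
proof -
  have "0 \<le> t" "l ` {0..t} \<subseteq> MX"
    using assms(1) unfolding coarse_arc_def coarse_embedding_interval_def by auto
  then show "min a t \<in> {0..t}" "l (min a t) \<in> MX"
    using assms(2) by auto
qed


lemma lifted_arc_near: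
  assumes "y1 \<in> MY" "y2 \<in> MY" "coarse_arc MX dX (\<pi> y1) (\<pi> y2) (t, l)" "a \<in> {0..t + 1}"
    and K: "0 \<le> K" "\<And>y. y \<in> MY \<Longrightarrow> dY (\<rho> (\<pi> y)) y \<le> K"
  shows "lifted_arc y1 y2 t l a \<in> MY" "\<rho> (l (min a t)) \<in> MY"
    "dY (lifted_arc y1 y2 t l a) (\<rho> (l (min a t))) \<le> K"
proof -
  have "0 \<le> t" "l ` {0..t} \<subseteq> MX"
    using assms(3) unfolding coarse_arc_def coarse_embedding_interval_def by auto
  moreover have "min a t \<in> {0..t}"
    using \<open>0 \<le> t\<close> assms(4) by auto
  ultimately show \<rho>l: "\<rho> (l (min a t)) \<in> MY"
    using \<rho>_in by blast
  show "lifted_arc y1 y2 t l a \<in> MY" "dY (lifted_arc y1 y2 t l a) (\<rho> (l (min a t))) \<le> K"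
    using lifted_arc_cases[OF assms(3,4)] \<rho>l assms(1,2) K Y.commute by auto
qed

lemma lifted_arc_dist_le:
  assumes "y1 \<in> MY" "y2 \<in> MY" "coarse_arc MX dX (\<pi> y1) (\<pi> y2) (t, l)" "a \<in> {0..t + 1}" "b \<in> {0..t + 1}"
    and K: "0 \<le> K" "\<And>y. y \<in> MY \<Longrightarrow> dY (\<rho> (\<pi> y)) y \<le> K"
  shows "dY (lifted_arc y1 y2 t l a) (lifted_arc y1 y2 t l b) \<le> dY (\<rho> (l (min a t))) (\<rho> (l (min b t))) + 2 * K"
    "dY (\<rho> (l (min a t))) (\<rho> (l (min b t))) \<le> dY (lifted_arc y1 y2 t l a) (lifted_arc y1 y2 t l b) + 2 * K"
proof -
  note near_a = lifted_arc_near[OF assms(1-4) K] and near_b = lifted_arc_near[OF assms(1-3,5) K]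
  show "dY (lifted_arc y1 y2 t l a) (lifted_arc y1 y2 t l b) \<le> dY (\<rho> (l (min a t))) (\<rho> (l (min b t))) + 2 * K"
    using near_a near_b Y.triangle[of "lifted_arc y1 y2 t l a" "\<rho> (l (min a t))" "\<rho> (l (min b t))"]
      Y.triangle[of "lifted_arc y1 y2 t l a" "\<rho> (l (min b t))" "lifted_arc y1 y2 t l b"]
      Y.commute[of "lifted_arc y1 y2 t l b" "\<rho> (l (min b t))"]
    by linarith
  show "dY (\<rho> (l (min a t))) (\<rho> (l (min b t))) \<le> dY (lifted_arc y1 y2 t l a) (lifted_arc y1 y2 t l b) + 2 * K"
    using near_a near_b Y.triangle[of "\<rho> (l (min a t))" "lifted_arc y1 y2 t l a" "\<rho> (l (min b t))"]
      Y.triangle[of "lifted_arc y1 y2 t l a" "lifted_arc y1 y2 t l b" "\<rho> (l (min b t))"]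
      Y.commute[of "\<rho> (l (min a t))" "lifted_arc y1 y2 t l a"]
    by linarith
qed


lemma lifted_arcs_uniformly_bornologous:
  assumes equi: "equicoarse dX \<Upsilon>" and "r > 0"
  shows "\<exists>s>0. \<forall>(t', \<mu>)\<in>lifted_arcs \<Upsilon>. \<forall>a\<in>{0..t'}. \<forall>b\<in>{0..t'}. \<bar>a - b\<bar> < r \<longrightarrow> dY (\<mu> a) (\<mu> b) < s"
proof -
  obtain K where K: "0 \<le> K" "\<And>y. y \<in> MY \<Longrightarrow> dY (\<rho> (\<pi> y)) y \<le> K"
    by (rule \<rho>\<pi>_close) blast
  obtain s1 where s1: "\<And>t l a b. (t, l) \<in> \<Upsilon> \<Longrightarrow> a \<in> {0..t} \<Longrightarrow> b \<in> {0..t} \<Longrightarrow>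
      \<bar>a - b\<bar> < r \<Longrightarrow> dX (l a) (l b) < s1"
    by (rule equicoarse_uniformly_bornologous[OF equi \<open>r > 0\<close>]) blast
  obtain s2 where s2: "\<And>x x'. x \<in> MX \<Longrightarrow> x' \<in> MX \<Longrightarrow> dX x x' \<le> s1 \<Longrightarrow> dY (\<rho> x) (\<rho> x') \<le> s2"
    by (rule coarse_map_bornologous[OF coarse_\<rho>]) blast
  have "dY (lifted_arc y1 y2 t l a) (lifted_arc y1 y2 t l b) < \<bar>s2\<bar> + 2 * K + 1"
    if y: "y1 \<in> MY" "y2 \<in> MY" and tl: "(t, l) \<in> \<Upsilon>" "coarse_arc MX dX (\<pi> y1) (\<pi> y2) (t, l)"
      and ab: "a \<in> {0..t + 1}" "b \<in> {0..t + 1}" "\<bar>a - b\<bar> < r" for y1 y2 t l a b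
  proof -
    note clamped_a = coarse_arc_clamped_point[OF tl(2) ab(1)]
      and clamped_b = coarse_arc_clamped_point[OF tl(2) ab(2)]
    have "\<bar>min a t - min b t\<bar> < r"
      using ab(3) \<open>r > 0\<close> by (auto simp: min_def abs_if)
    then have "dX (l (min a t)) (l (min b t)) < s1"
      using s1[OF tl(1)] clamped_a clamped_b by blast
    then have "dY (\<rho> (l (min a t))) (\<rho> (l (min b t))) \<le> s2"
      using s2[OF clamped_a(2) clamped_b(2)] by simp
    then show ?thesis
      using lifted_arc_dist_le(1)[OF y tl(2) ab(1,2) K] by linarith
  qed
  then show ?thesis
    using K(1) by (intro exI[of _ "\<bar>s2\<bar> + 2 * K + 1"]) (auto simp: lifted_arcs_def)
qed


lemma lifted_arcs_uniformly_proper: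
  assumes equi: "equicoarse dX \<Upsilon>" and "r > 0"
  shows "\<exists>s>0. \<forall>(t', \<mu>)\<in>lifted_arcs \<Upsilon>. \<forall>a\<in>{0..t'}. \<forall>b\<in>{0..t'}. dY (\<mu> a) (\<mu> b) < r \<longrightarrow> \<bar>a - b\<bar> < s"
proof -
  obtain KY where KY: "0 \<le> KY" "\<And>y. y \<in> MY \<Longrightarrow> dY (\<rho> (\<pi> y)) y \<le> KY"
    by (rule \<rho>\<pi>_close) blast
  obtain KX where KX: "0 \<le> KX" "\<And>x. x \<in> MX \<Longrightarrow> dX (\<pi> (\<rho> x)) x \<le> KX"
    by (rule \<pi>\<rho>_close) blast
  obtain s1 where s1: "\<And>y y'. y \<in> MY \<Longrightarrow> y' \<in> MY \<Longrightarrow> dY y y' \<le> r + 2 * KY \<Longrightarrow> dX (\<pi> y) (\<pi> y') \<le> s1"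
    by (rule coarse_map_bornologous[OF coarse_\<pi>]) blast
  have "\<bar>s1\<bar> + 2 * KX + 1 > 0"
    using KX(1) by linarith
  then obtain s2 where "s2 > 0" and s2: "\<And>t l a b. (t, l) \<in> \<Upsilon> \<Longrightarrow> a \<in> {0..t} \<Longrightarrow> b \<in> {0..t} \<Longrightarrow>
      dX (l a) (l b) < \<bar>s1\<bar> + 2 * KX + 1 \<Longrightarrow> \<bar>a - b\<bar> < s2"
    by (rule equicoarse_uniformly_proper[OF equi]) blast
  have "\<bar>a - b\<bar> < s2 + 1"
    if y: "y1 \<in> MY" "y2 \<in> MY" and tl: "(t, l) \<in> \<Upsilon>" "coarse_arc MX dX (\<pi> y1) (\<pi> y2) (t, l)"
      and ab: "a \<in> {0..t + 1}" "b \<in> {0..t + 1}" "dY (lifted_arc y1 y2 t l a) (lifted_arc y1 y2 t l b) < r"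
    for y1 y2 t l a b
  proof -
    note clamped_a = coarse_arc_clamped_point[OF tl(2) ab(1)]
      and clamped_b = coarse_arc_clamped_point[OF tl(2) ab(2)]
    let ?xa = "l (min a t)" and ?xb = "l (min b t)"
    have "dY (\<rho> ?xa) (\<rho> ?xb) \<le> r + 2 * KY"
      using lifted_arc_dist_le(2)[OF y tl(2) ab(1,2) KY] ab(3) by linarith
    then have "dX (\<pi> (\<rho> ?xa)) (\<pi> (\<rho> ?xb)) \<le> s1"
      using s1[OF \<rho>_in[OF clamped_a(2)] \<rho>_in[OF clamped_b(2)]] by simp
    moreover have "?xa \<in> MX" "?xb \<in> MX" "\<pi> (\<rho> ?xa) \<in> MX" "\<pi> (\<rho> ?xb) \<in> MX"
      using clamped_a clamped_b \<pi>_in \<rho>_in by auto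
    ultimately have "dX ?xa ?xb < \<bar>s1\<bar> + 2 * KX + 1"
      using KX(2)[of ?xa] KX(2)[of ?xb]
        X.triangle[of ?xa "\<pi> (\<rho> ?xa)" "\<pi> (\<rho> ?xb)"] X.triangle[of ?xa "\<pi> (\<rho> ?xb)" ?xb]
        X.commute[of ?xa "\<pi> (\<rho> ?xa)"]
      by linarith
    then have "\<bar>min a t - min b t\<bar> < s2"
      using s2[OF tl(1)] clamped_a clamped_b by blast
    then show ?thesis
      using dist_le_min_dist[OF ab(1,2)] by linarith
  qed
  then show ?thesis
    using \<open>s2 > 0\<close> by (intro exI[of _ "s2 + 1"]) (auto simp: lifted_arcs_def)
qed


lemma equicoarse_lifted_arcs:
  assumes "equicoarse dX \<Upsilon>"
  shows "equicoarse dY (lifted_arcs \<Upsilon>)"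
  unfolding equicoarse_def
  using lifted_arcs_uniformly_bornologous[OF assms] lifted_arcs_uniformly_proper[OF assms] by blast

lemma coarse_arc_lifted_arc:
  assumes "equicoarse dX \<Upsilon>" "(t, l) \<in> \<Upsilon>" "y1 \<in> MY" "y2 \<in> MY" "coarse_arc MX dX (\<pi> y1) (\<pi> y2) (t, l)"
  shows "coarse_arc MY dY y1 y2 (t + 1, lifted_arc y1 y2 t l)"
proof -
  obtain KY where KY: "0 \<le> KY" "\<And>y. y \<in> MY \<Longrightarrow> dY (\<rho> (\<pi> y)) y \<le> KY"
    by (rule \<rho>\<pi>_close) blast
  have "0 \<le> t"
    using assms(5) unfolding coarse_arc_def coarse_embedding_interval_def by auto
  moreover have "(t + 1, lifted_arc y1 y2 t l) \<in> lifted_arcs \<Upsilon>"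
    unfolding lifted_arcs_def using assms(2-5) by blast
  moreover have "lifted_arc y1 y2 t l ` {0..t + 1} \<subseteq> MY"
    using lifted_arc_near(1)[OF assms(3-5) _ KY] by blast
  ultimately have "coarse_embedding_interval MY dY (t + 1) (lifted_arc y1 y2 t l)"
    using equicoarse_imp_coarse_embedding_interval[OF equicoarse_lifted_arcs[OF assms(1)]] by simp
  then show ?thesis
    unfolding coarse_arc_def lifted_arc_def using \<open>0 \<le> t\<close> by simp
qed

lemma is_compactification_pulled: "is_compactification Y.mtopology W f_star"
  unfolding is_compactification_def
proof (intro conjI admissible_f_star)
  show "compact_space pulled_compactification"
  proof (rule compact_space_plus_topology[OF admissible_f_star])
    show "compact_space W"
      by (rule compactification_compact_boundary[OF X.is_compactification])
    fix D assume "closedin pulled_compactification D" "Inr -` D = {}"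
    then show "compactin Y.mtopology (Inl -` D)"
      using mbounded_if_boundary_disjoint Y.compactin_iff_closedin_mbounded
      unfolding closedin_plus_topology[OF admissible_f_star] by blast
  qed
  show "Hausdorff_space pulled_compactification"
  proof (rule Hausdorff_space_plus_topology[OF admissible_f_star Y.Hausdorff_space_mtopology _ continuous_map_\<pi>_plus])
    show "\<exists>U K. openin Y.mtopology U \<and> closedin Y.mtopology K \<and> f_star K = {} \<and> y \<in> U \<and> U \<subseteq> K"
      if "y \<in> topspace Y.mtopology" for y
      using that f_star_compactin_empty[OF Y.compactin_mcball] Y.mball_subset_mcball
      by (intro exI[of _ "Y.mball y 1"] exI[of _ "Y.mcball y 1"]) auto
    show "Hausdorff_space X.compactification"
      using X.is_compactification unfolding is_compactification_def by blast
  qed (simp add: inj_on_def)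
  have "f_star MY = topspace W"
  proof
    show "f_star MY \<subseteq> topspace W"
      unfolding pull_admissible_def by (rule closure_of_subset_topspace)
    have "f {x \<in> MX. \<rho> x \<in> MY} \<subseteq> f_star MY"
      using boundary_subset_f_star[of MY] by simp
    moreover have "{x \<in> MX. \<rho> x \<in> MY} = MX"
      using \<rho>_in by auto
    ultimately show "topspace W \<subseteq> f_star MY"
      using compactification_boundary_topspace[OF X.is_compactification] by simp
  qed
  then show "pulled_compactification closure_of (Inl ` topspace Y.mtopology) = topspace pulled_compactification"
    using closure_of_plus_topology_Inl_image[OF admissible_f_star closedin_topspace]
    by (simp add: topspace_plus_topology[OF admissible_f_star])
qed

lemma \<rho>\<pi>_close_off_bounded:
  assumes V: "openin (prod_topology pulled_compactification pulled_compactification) V"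
    and diag: "\<And>z. z \<in> topspace pulled_compactification \<Longrightarrow> (z, z) \<in> V"
  obtains S where "Y.mbounded S"
    "\<And>y. y \<in> MY \<Longrightarrow> y \<notin> S \<Longrightarrow> (Inl y, Inl (\<rho> (\<pi> y))) \<in> V \<and> (Inl (\<rho> (\<pi> y)), Inl y) \<in> V"
proof -
  let ?Z = pulled_compactification
  define g :: "'y + 'w \<Rightarrow> 'y + 'w" where "g = case_sum (Inl \<circ> \<rho>) Inr \<circ> case_sum (Inl \<circ> \<pi>) Inr"
  have "continuous_map ?Z ?Z g"
    unfolding g_def using continuous_map_compose[OF continuous_map_\<pi>_plus continuous_map_\<rho>_plus] .
  then have "continuous_map ?Z (prod_topology ?Z ?Z) (\<lambda>z. (z, g z))"
    "continuous_map ?Z (prod_topology ?Z ?Z) (\<lambda>z. (g z, z))"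
    by (simp_all add: continuous_map_pairedI)
  then have "openin ?Z ({z \<in> topspace ?Z. (z, g z) \<in> V} \<inter> {z \<in> topspace ?Z. (g z, z) \<in> V})"
    using openin_continuous_map_preimage V by blast
  moreover define N where "N = {z \<in> topspace ?Z. (z, g z) \<in> V} \<inter> {z \<in> topspace ?Z. (g z, z) \<in> V}"
  ultimately have "openin ?Z N"
    by simp
  then have closed: "closedin ?Z (topspace ?Z - N)"
    by (rule closedin_diff[OF closedin_topspace])
  have "Inr -` (topspace ?Z - N) = {}"
    using diag unfolding N_def g_def by auto
  show thesis
  proof (rule that[OF mbounded_if_boundary_disjoint[OF closed \<open>Inr -` (topspace ?Z - N) = {}\<close>]])
    fix y assume "y \<in> MY" "y \<notin> Inl -` (topspace ?Z - N)"
    moreover from this(1) have "Inl y \<in> topspace ?Z"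
      by (simp add: topspace_plus_topology[OF admissible_f_star])
    ultimately have "Inl y \<in> N"
      by blast
    then show "(Inl y, Inl (\<rho> (\<pi> y))) \<in> V \<and> (Inl (\<rho> (\<pi> y)), Inl y) \<in> V"
      unfolding N_def g_def by simp
  qed
qed

lemma lifted_arc_avoids_imp_arc_avoids:
  assumes "coarse_arc MX dX (\<pi> y1) (\<pi> y2) (t, l)" "y1 \<in> MY"
    and avoids: "lifted_arc y1 y2 t l ` {0..t + 1} \<inter> (\<rho> ` A \<union> {y \<in> MY. \<pi> y \<in> A}) = {}"
  shows "l ` {0..t} \<inter> A = {}"
proof (rule ccontr)
  assume "l ` {0..t} \<inter> A \<noteq> {}"
  then obtain e where e: "e \<in> {0..t}" "l e \<in> A"
    by blast
  have "0 \<le> t" "l 0 = \<pi> y1"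
    using assms(1) unfolding coarse_arc_def coarse_embedding_interval_def by auto
  show False
  proof (cases "e = 0")
    case True
    have "0 \<in> {0..t + 1}"
      using \<open>0 \<le> t\<close> by simp
    then have "y1 \<in> lifted_arc y1 y2 t l ` {0..t + 1}"
      using lifted_arc_endpoints(1)[OF \<open>0 \<le> t\<close>] by (metis image_eqI)
    moreover have "y1 \<in> {y \<in> MY. \<pi> y \<in> A}"
      using True e(2) \<open>l 0 = \<pi> y1\<close> assms(2) by simp
    ultimately show False
      using avoids by blast
  next
    case False
    then have "lifted_arc y1 y2 t l e = \<rho> (l e)"
      using e(1) unfolding lifted_arc_def by auto
    moreover have "e \<in> {0..t + 1}"
      using e(1) by simp
    ultimately have "\<rho> (l e) \<in> lifted_arc y1 y2 t l ` {0..t + 1}"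
      by (metis image_eqI)
    then show False
      using avoids e(2) by blast
  qed
qed


lemma lifted_arc_small:
  assumes arc: "coarse_arc MX dX (\<pi> y1) (\<pi> y2) (t, l)"
    and chain: "\<And>a b c d. (a, b) \<in> V \<Longrightarrow> (b, c) \<in> V \<Longrightarrow> (c, d) \<in> V \<Longrightarrow> (a, d) \<in> u"
    and diag: "\<And>y. y \<in> MY \<Longrightarrow> (Inl y, Inl y) \<in> V"
    and ends: "\<And>y. y \<in> {y1, y2} \<Longrightarrow> (Inl y, Inl (\<rho> (\<pi> y))) \<in> V \<and> (Inl (\<rho> (\<pi> y)), Inl y) \<in> V"
    and middle: "\<And>c c'. c \<in> {0..t} \<Longrightarrow> c' \<in> {0..t} \<Longrightarrow> (Inl (\<rho> (l c)), Inl (\<rho> (l c'))) \<in> V"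
  shows "small_for u (Inl ` lifted_arc y1 y2 t l ` {0..t + 1})"
proof -
  have t: "0 \<le> t" "l ` {0..t} \<subseteq> MX"
    using arc unfolding coarse_arc_def coarse_embedding_interval_def by auto
  have near: "(Inl (lifted_arc y1 y2 t l a), Inl (\<rho> (l (min a t)))) \<in> V \<and>
      (Inl (\<rho> (l (min a t))), Inl (lifted_arc y1 y2 t l a)) \<in> V" if "a \<in> {0..t + 1}" for a
  proof -
    have "min a t \<in> {0..t}"
      using t(1) that by auto
    then have "\<rho> (l (min a t)) \<in> MY"
      using t(2) \<rho>_in by blast
    then show ?thesis
      using lifted_arc_cases[OF arc that] diag ends by auto
  qed
  show ?thesis
    unfolding small_for_def
  proof clarify
    fix a b assume "a \<in> {0..t + 1}" "b \<in> {0..t + 1}"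
    moreover from this have "min a t \<in> {0..t}" "min b t \<in> {0..t}"
      using t(1) by auto
    ultimately show "(Inl (lifted_arc y1 y2 t l a), Inl (lifted_arc y1 y2 t l b)) \<in> u"
      using chain near middle by blast
  qed
qed

lemma lifted_arcs_small:
  assumes u: "u \<in> compact_uniformity pulled_compactification"
    and small: "\<And>u. u \<in> compact_uniformity X.compactification \<Longrightarrow>
      \<exists>S. X.mbounded S \<and> (\<forall>(t, l)\<in>\<Upsilon>. l ` {0..t} \<inter> S = {} \<longrightarrow> small_for u (Inl ` l ` {0..t}))"
  shows "\<exists>S. Y.mbounded S \<and>
    (\<forall>(t, l)\<in>lifted_arcs \<Upsilon>. l ` {0..t} \<inter> S = {} \<longrightarrow> small_for u (Inl ` l ` {0..t}))"
proof -
  let ?Z = pulled_compactification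
  have "compact_space ?Z" "Hausdorff_space ?Z"
    using is_compactification_pulled unfolding is_compactification_def by blast+
  then obtain V where V: "openin (prod_topology ?Z ?Z) V" "\<And>z. z \<in> topspace ?Z \<Longrightarrow> (z, z) \<in> V"
    and chain: "\<And>a b c d. (a, b) \<in> V \<Longrightarrow> (b, c) \<in> V \<Longrightarrow> (c, d) \<in> V \<Longrightarrow> (a, d) \<in> u"
    by (rule compact_uniformity_split3[OF _ _ u]) auto
  obtain SG where "Y.mbounded SG"
    and SG: "\<And>y. y \<in> MY \<Longrightarrow> y \<notin> SG \<Longrightarrow> (Inl y, Inl (\<rho> (\<pi> y))) \<in> V \<and> (Inl (\<rho> (\<pi> y)), Inl y) \<in> V"
    by (rule \<rho>\<pi>_close_off_bounded[OF V(1)]) (use V(2) in auto)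
  define Q where "Q = {p \<in> topspace (prod_topology X.compactification X.compactification).
    (case_sum (Inl \<circ> \<rho>) Inr (fst p), case_sum (Inl \<circ> \<rho>) Inr (snd p)) \<in> V}"
  have "Q \<in> compact_uniformity X.compactification"
    unfolding Q_def using continuous_map_\<rho>_plus V by (rule compact_uniformity_preimage)
  then obtain SX where "X.mbounded SX"
    and SX: "\<forall>(t, l)\<in>\<Upsilon>. l ` {0..t} \<inter> SX = {} \<longrightarrow> small_for Q (Inl ` l ` {0..t})"
    using small by blast
  define S where "S = SG \<union> \<rho> ` SX \<union> {y \<in> MY. \<pi> y \<in> SX}"
  have "Y.mbounded S"
    unfolding S_def Y.mbounded_Un using \<open>Y.mbounded SG\<close> \<open>X.mbounded SX\<close>
      coarse_map_mbounded_image[OF X.Metric_space_axioms Y.Metric_space_axioms coarse_\<rho>]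
      coarse_map_mbounded_preimage[OF Y.Metric_space_axioms X.Metric_space_axioms coarse_\<pi>] by blast
  moreover have "small_for u (Inl ` lifted_arc y1 y2 t l ` {0..t + 1})"
    if y: "y1 \<in> MY" "y2 \<in> MY" and tl: "(t, l) \<in> \<Upsilon>" "coarse_arc MX dX (\<pi> y1) (\<pi> y2) (t, l)"
      and avoids: "lifted_arc y1 y2 t l ` {0..t + 1} \<inter> S = {}" for y1 y2 t l
  proof (rule lifted_arc_small[OF tl(2) chain])
    have "0 \<le> t"
      using tl(2) unfolding coarse_arc_def coarse_embedding_interval_def by auto
    then have "0 \<in> {0..t + 1}" "t + 1 \<in> {0..t + 1}"
      by auto
    then have "y1 \<in> lifted_arc y1 y2 t l ` {0..t + 1}" "y2 \<in> lifted_arc y1 y2 t l ` {0..t + 1}"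
      using lifted_arc_endpoints[OF \<open>0 \<le> t\<close>] by (metis image_eqI)+
    then have "y1 \<notin> S" "y2 \<notin> S"
      using avoids by blast+
    then show "(Inl y, Inl (\<rho> (\<pi> y))) \<in> V \<and> (Inl (\<rho> (\<pi> y)), Inl y) \<in> V" if "y \<in> {y1, y2}" for y
      using that y SG unfolding S_def by blast
    show "(Inl y, Inl y) \<in> V" if "y \<in> MY" for y
      using that V(2) by (simp add: topspace_plus_topology[OF admissible_f_star])
    have "lifted_arc y1 y2 t l ` {0..t + 1} \<inter> (\<rho> ` SX \<union> {y \<in> MY. \<pi> y \<in> SX}) = {}"
      using avoids unfolding S_def by blast
    then have "l ` {0..t} \<inter> SX = {}"
      by (rule lifted_arc_avoids_imp_arc_avoids[OF tl(2) y(1)])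
    then have small_Q: "small_for Q (Inl ` l ` {0..t})"
      using bspec[OF SX tl(1)] by simp
    show "(Inl (\<rho> (l c)), Inl (\<rho> (l c'))) \<in> V" if "c \<in> {0..t}" "c' \<in> {0..t}" for c c'
    proof -
      have "(Inl (l c), Inl (l c')) \<in> Q"
        using small_Q that unfolding small_for_def by blast
      then show ?thesis
        unfolding Q_def by simp
    qed
  qed
  ultimately show ?thesis
    unfolding lifted_arcs_def by blast
qed

theorem coarse_karlsson_pulled: "coarse_karlsson MY dY W f_star"
proof -
  obtain \<Upsilon> where equi: "equicoarse dX \<Upsilon>"
    and arcs: "\<And>x y. x \<in> MX \<Longrightarrow> y \<in> MX \<Longrightarrow> \<exists>ar\<in>\<Upsilon>. coarse_arc MX dX x y ar"
    and small: "\<And>u. u \<in> compact_uniformity X.compactification \<Longrightarrow>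
      \<exists>S. X.mbounded S \<and> (\<forall>(t, l)\<in>\<Upsilon>. l ` {0..t} \<inter> S = {} \<longrightarrow> small_for u (Inl ` l ` {0..t}))"
    by (rule X.Karlsson_arcs) blast
  have connect: "\<exists>ar\<in>lifted_arcs \<Upsilon>. coarse_arc MY dY y1 y2 ar" if y: "y1 \<in> MY" "y2 \<in> MY" for y1 y2
  proof -
    obtain ar where "ar \<in> \<Upsilon>" "coarse_arc MX dX (\<pi> y1) (\<pi> y2) ar"
      using arcs \<pi>_in y by blast
    then obtain t l where "(t, l) \<in> \<Upsilon>" "coarse_arc MX dX (\<pi> y1) (\<pi> y2) (t, l)"
      by (cases ar) blast
    then show ?thesis
      using coarse_arc_lifted_arc[OF equi] y unfolding lifted_arcs_def by blast
  qed
  have lifted_are_arcs: "\<exists>y1 y2. coarse_arc MY dY y1 y2 ar" if "ar \<in> lifted_arcs \<Upsilon>" for ar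
    using that coarse_arc_lifted_arc[OF equi] unfolding lifted_arcs_def by blast
  have small_lifted: "\<exists>S. S \<subseteq> MY \<and> Y.mbounded S \<and>
      (\<forall>(t, l)\<in>lifted_arcs \<Upsilon>. l ` {0..t} \<inter> S = {} \<longrightarrow> small_for u (Inl ` l ` {0..t}))"
    if "u \<in> compact_uniformity pulled_compactification" for u
    using lifted_arcs_small[OF that small] Y.mbounded_subset_mspace by blast
  show ?thesis
    unfolding coarse_karlsson_def Let_def
    using is_compactification_pulled equicoarse_lifted_arcs[OF equi] connect lifted_are_arcs small_lifted
    by blast
qed

end

theorem mainTheorem17:
  fixes MX :: "'x set" and dX :: "'x \<Rightarrow> 'x \<Rightarrow> real"
    and MY :: "'y set" and dY :: "'y \<Rightarrow> 'y \<Rightarrow> real"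
    and W :: "'w topology" and f :: "'x set \<Rightarrow> 'w set"
    and \<pi> :: "'y \<Rightarrow> 'x" and \<rho> :: "'x \<Rightarrow> 'y"
  assumes "proper_metric_space MX dX" and "proper_metric_space MY dY"
    and "continuous_map (Metric_space.mtopology MY dY) (Metric_space.mtopology MX dX) \<pi>"
    and "continuous_map (Metric_space.mtopology MX dX) (Metric_space.mtopology MY dY) \<rho>"
    and "coarse_map MY (bounded_coarse MY dY) MX (bounded_coarse MX dX) \<pi>"
    and "coarse_quasi_inverse MY (bounded_coarse MY dY) MX (bounded_coarse MX dX) \<pi> \<rho>"
    and "coarse_karlsson MX dX W f"
  shows "coarse_karlsson MY dY W
           (pull_admissible (Metric_space.mtopology MX dX) W f \<pi>)"
proof -
  have "Metric_space MX dX" "Metric_space MY dY"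
    using assms(1,2) unfolding proper_metric_space_def by blast+
  then have "coarse_Karlsson_transfer MX dX W f MY dY \<pi> \<rho>"
    using assms unfolding coarse_Karlsson_transfer_def coarse_Karlsson_transfer_axioms_def
      coarse_Karlsson_space_def coarse_Karlsson_space_axioms_def
      Proper_metric_space_def Proper_metric_space_axioms_def
    by blast
  then show ?thesis
    by (rule coarse_Karlsson_transfer.coarse_karlsson_pulled)
qed

end
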